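(* Assume Assumption 1 holds, fix any prediction function $\mathcal C$, and let $\hat C(X_{n+1})$ be produced by the standard label-conditional conformal method applied to the contaminated data $\mathcal D$. Suppose that, almost surely, for all $t\in\mathbb R$ and $k\in[K]$, $$\max_{l\neq k}F^k_l(t)\le F^k_k(t).$$ Then $\Delta_k(\hat\tau_k)\ge0$ almost surely for every $k\in[K]$, and hence $\mathbb P[Y_{n+1}\in\hat C(X_{n+1})\mid Y_{n+1}=k]\ge1-\alpha$ for every $k\in[K]$.
   Context: Let $K\ge 2$, $d\ge 1$, $n\ge 2$ be integers and $[m]=\{1,\dots,m\}$. Let $(X_i,Y_i,\tilde Y_i)$, $i\in[n+1]$, be i.i.d. copies of a random triple $(X,Y,\tilde Y)$ with $X\in\mathbb R^d$, true (unobserved) label $Y\in[K]$ and observed, possibly contaminated, label $\tilde Y\in[K]$. The observed data are $\mathcal D=\{(X_i,\tilde Y_i)\}_{i\in[n]}$; $X_{n+1}$ is a test feature vector with unknown label $Y_{n+1}$. The index set $[n]$ is split, independently of all data, into disjoint nonempty sets $\mathcal D^{\mathrm{train}}$ and $\mathcal D^{\mathrm{cal}}$, and a classifier $\hat\pi$ is fitted using only the observations indexed by $\mathcal D^{\mathrm{train}}$. A prediction function is a map $\mathcal C$ (which may depend on $\hat\pi$) assigning to each $x\in\mathbb R^d$ and $\tau=(\tau_1,\dots,\tau_K)\in[0,1]^K$ a set $\mathcal C(x,\tau)\subseteq[K]$ such that: $\mathcal C(x,\tau)$ is nondecreasing (for inclusion) in each coordinate of $\tau$; whether $k\in\mathcal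 C(x,\tau)$ depends on $\tau$ only through $\tau_k$; and $k\in\mathcal C(x,\tau)$ whenever $\tau_k=1$. The associated conformity score is $\hat s(x,k)=\inf\{\tau_k\in[0,1]: k\in\mathcal C(x,\tau)\}$, and it is understood that $k\in\mathcal C(x,\tau)$ if and only if $\hat s(x,k)\le\tau_k$. Let $\alpha\in(0,1)$. For $k\in[K]$ let $\mathcal D^{\mathrm{cal}}_k=\{i\in\mathcal D^{\mathrm{cal}}:\tilde Y_i=k\}$ and $n_k=|\mathcal D^{\mathrm{cal}}_k|$. All probabilities and expectations are conditional on the split and on $(n_1,\dots,n_K)$, which are treated as fixed with $n_k\ge1$ for all $k$; $n_*=\min_k n_k$. For $k,l\in[K]$ and $t\in\mathbb R$, let $F^k_l(t)=\mathbb P[\hat s(X,k)\le t\mid Y=l,\mathcal D^{\mathrm{train}}]$ and $\tilde F^k_l(t)=\mathbb P[\hat s(X,k)\le t\mid \tilde Y=l,\mathcal D^{\mathrm{train}}]$, where $(X,Y,\tilde Y)$ is a fresh independent copy; the coverage inflation factor is $\Delta_k(t)=F^k_k(t)-\tilde F^k_k(t)$. Standard label-conditional conformal method: for each $k$, $\hat\tau_k$ is the $\lceil(1+n_k)(1-\alpha)\rceil$-th smallest value in $\{\hat s(X_i,k):i\in\mathcal D^{\mathrm{cal}}_k\}$ (with $\hat\tau_k=1$ if $\lceil(1+n_k)(1-\alpha)\rceil>n_k$), and $\hat C(X_{n+1})=\mathcal C(X_{n+1},\hat\tau)$ with $\hat\tau=(\hat\tau_1,\dots,\hat\tau_K)$.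 Assumption 1 (linear contamination): $\tilde Y$ is conditionally independent of $X$ given $Y$; all classes have positive probability under both $Y$ and $\tilde Y$. Let $M\in[0,1]^{K\times K}$, $M_{kl}=\mathbb P[Y=l\mid\tilde Y=k]$ (rows of $M$ sum to $1$). *)

theory Defs
  imports "HOL-Probability.Probability"
begin

text \<open>Training data: a function on the training index set T (extensional),
  giving the observed pairs (X_i, Ytilde_i).\<close>

type_synonym ('x) tdata = "nat \<Rightarrow> 'x \<times> nat"

definition tau_box :: "nat \<Rightarrow> (nat \<Rightarrow> real) set" where
  "tau_box K = {\<tau>. \<forall>k\<in>{1..K}. \<tau> k \<in> {0..1}}"

definition prediction_function ::
  "nat \<Rightarrow> ('x tdata \<Rightarrow> 'x \<Rightarrow> (nat \<Rightarrow> real) \<Rightarrow> nat set) \<Rightarrow> bool" where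
  "prediction_function K C \<longleftrightarrow>
     (\<forall>D x \<tau>. \<tau> \<in> tau_box K \<longrightarrow> C D x \<tau> \<subseteq> {1..K}) \<and>
     (\<forall>D x \<tau> \<tau>'. \<tau> \<in> tau_box K \<longrightarrow> \<tau>' \<in> tau_box K \<longrightarrow>
        (\<forall>k\<in>{1..K}. \<tau> k \<le> \<tau>' k) \<longrightarrow> C D x \<tau> \<subseteq> C D x \<tau>') \<and>
     (\<forall>D x \<tau> \<tau>' k. \<tau> \<in> tau_box K \<longrightarrow> \<tau>' \<in> tau_box K \<longrightarrow> k \<in> {1..K} \<longrightarrow>
        \<tau> k = \<tau>' k \<longrightarrow> (k \<in> C D x \<tau> \<longleftrightarrow> k \<in> C D x \<tau>')) \<and>
     (\<forall>D x \<tau> k. \<tau> \<in> tau_box K \<longrightarrow> k \<in> {1..K} \<longrightarrow> \<tau> k = 1 \<longrightarrow> k \<in> C D x \<tau>)"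

text \<open>Conformity score: s(x,k) = inf { tau_k in [0,1] : k in C(x,tau) }.
  Since membership of k depends on tau only through tau_k, we evaluate C
  at the constant threshold vector.\<close>
definition conf_score ::
  "('x tdata \<Rightarrow> 'x \<Rightarrow> (nat \<Rightarrow> real) \<Rightarrow> nat set) \<Rightarrow> 'x tdata \<Rightarrow> 'x \<Rightarrow> nat \<Rightarrow> real" where
  "conf_score C D x k = Inf {t \<in> {0..1}. k \<in> C D x (\<lambda>_. t)}"

definition score_consistent ::
  "nat \<Rightarrow> ('x tdata \<Rightarrow> 'x \<Rightarrow> (nat \<Rightarrow> real) \<Rightarrow> nat set) \<Rightarrow> bool" where
  "score_consistent K C \<longleftrightarrow>
     (\<forall>D x \<tau> k. \<tau> \<in> tau_box K \<longrightarrow> k \<in> {1..K} \<longrightarrow>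
        (k \<in> C D x \<tau> \<longleftrightarrow> conf_score C D x k \<le> \<tau> k))"

definition conf_quantile :: "real \<Rightarrow> real list \<Rightarrow> real" where
  "conf_quantile \<alpha> vs =
     (let m = length vs; r = nat \<lceil>(1 + real m) * (1 - \<alpha>)\<rceil>
      in if r > m then 1 else sort vs ! (r - 1))"

text \<open>Law of a generic triple (X, Y, Ytilde): a measure on features x true label
  x observed label.  Conditional CDFs of a score function g given Y = l and
  given Ytilde = l.\<close>
definition cdf_true :: "('x \<times> nat \<times> nat) measure \<Rightarrow> ('x \<Rightarrow> real) \<Rightarrow> nat \<Rightarrow> real \<Rightarrow> real" where
  "cdf_true P g l t =
     measure P {z \<in> space P. g (fst z) \<le> t \<and> fst (snd z) = l} /
     measure P {z \<in> space P. fst (snd z) = l}"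

definition cdf_obs :: "('x \<times> nat \<times> nat) measure \<Rightarrow> ('x \<Rightarrow> real) \<Rightarrow> nat \<Rightarrow> real \<Rightarrow> real" where
  "cdf_obs P g l t =
     measure P {z \<in> space P. g (fst z) \<le> t \<and> snd (snd z) = l} /
     measure P {z \<in> space P. snd (snd z) = l}"

text \<open>Ytilde conditionally independent of X given the (discrete) Y.\<close>
definition cond_indep_obs :: "('x \<times> nat \<times> nat) measure \<Rightarrow> 'x set set \<Rightarrow> bool" where
  "cond_indep_obs P \<A> \<longleftrightarrow>
     (\<forall>A\<in>\<A>. \<forall>k l.
        measure P {z \<in> space P. fst z \<in> A \<and> fst (snd z) = l \<and> snd (snd z) = k}
          * measure P {z \<in> space P. fst (snd z) = l}
        = measure P {z \<in> space P. fst z \<in> A \<and> fst (snd z) = l}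
          * measure P {z \<in> space P. fst (snd z) = l \<and> snd (snd z) = k})"


definition triple_space :: "('x::topological_space \<times> nat \<times> nat) measure" where
  "triple_space = borel \<Otimes>\<^sub>M (count_space UNIV \<Otimes>\<^sub>M count_space UNIV)"

definition train_data :: "(nat \<Rightarrow> 'w \<Rightarrow> 'x) \<Rightarrow> (nat \<Rightarrow> 'w \<Rightarrow> nat) \<Rightarrow> nat set \<Rightarrow> 'w \<Rightarrow> 'x tdata" where
  "train_data X Yt T \<omega> = restrict (\<lambda>i. (X i \<omega>, Yt i \<omega>)) T"

definition lc_threshold ::
  "real \<Rightarrow> ('x tdata \<Rightarrow> 'x \<Rightarrow> (nat \<Rightarrow> real) \<Rightarrow> nat set) \<Rightarrow> (nat \<Rightarrow> 'w \<Rightarrow> 'x) \<Rightarrow>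
   (nat \<Rightarrow> 'w \<Rightarrow> nat) \<Rightarrow> nat set \<Rightarrow> nat set \<Rightarrow> 'w \<Rightarrow> nat \<Rightarrow> real" where
  "lc_threshold \<alpha> C X Yt T Cal \<omega> k =
     conf_quantile \<alpha>
       (map (\<lambda>i. conf_score C (train_data X Yt T \<omega>) (X i \<omega>) k)
            (filter (\<lambda>i. Yt i \<omega> = k) (sorted_list_of_set Cal)))"

end

theory Submission
  imports Defs "HOL-Combinatorics.Transposition"
begin

text \<open>
  Part (i): given \<open>Y\<close>, the score of \<open>X\<close> does not depend on \<open>Y~\<close>, so the distribution of the
  score given \<open>Y~ = k\<close> is the mixture \<open>F~\<^sup>k\<^sub>k = \<Sum>\<^sub>l M\<^sub>k\<^sub>l F\<^sup>k\<^sub>l\<close> of the distributions given the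
  true labels. If \<open>F\<^sup>k\<^sub>k\<close> dominates every \<open>F\<^sup>k\<^sub>l\<close>, the mixture lies below \<open>F\<^sup>k\<^sub>k\<close>, so the coverage
  inflation \<open>\<Delta>\<^sub>k\<close> is nonnegative at every threshold.

  Part (ii): the label-conditional threshold is valid for the observed labels by exchangeability:
  exchanging the test point with each of the \<open>m\<close> calibration points of observed label \<open>k\<close>, at
  least \<open>\<lceil>(1 + m)(1 - \<alpha>)\<rceil>\<close> of the \<open>m + 1\<close> exchanged data sets cover the test point. Given the
  first \<open>n\<close> data points, the test point is covered with true label \<open>k\<close> with probability
  \<open>P[Y = k] F\<^sup>k\<^sub>k(\<tau>)\<close> and with observed label \<open>k\<close> with probability \<open>P[Y~ = k] F~\<^sup>k\<^sub>k(\<tau>)\<close>; by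
  part (i) the former dominates the latter up to the factor \<open>P[Y = k] / P[Y~ = k]\<close>, which turns
  observed-label coverage into true-label coverage.
\<close>

section \<open>Conformal quantiles and counting\<close>

lemma le_sort_nth_iff_count_less:
  fixes vs :: "'a::linorder list"
  assumes "1 \<le> r" "r \<le> length vs"
  shows "s \<le> sort vs ! (r - 1) \<longleftrightarrow> length (filter (\<lambda>v. v < s) vs) < r"
proof -
  define ws where "ws = sort vs"
  have sorted: "sorted ws" and len: "length ws = length vs" unfolding ws_def by auto
  have "length (filter (\<lambda>v. v < s) vs) = length (filter (\<lambda>v. v < s) ws)"
    unfolding ws_def by (metis mset_filter mset_sort size_mset)
  then have count: "length (filter (\<lambda>v. v < s) vs) = card {j. j < length ws \<and> ws ! j < s}"
    by (simp add: length_filter_conv_card)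
  show ?thesis
  proof
    assume le: "s \<le> sort vs ! (r - 1)"
    have "{j. j < length ws \<and> ws ! j < s} \<subseteq> {..<r - 1}"
    proof (rule subsetI, rule ccontr)
      fix j assume j: "j \<in> {j. j < length ws \<and> ws ! j < s}" "j \<notin> {..<r - 1}"
      then have "ws ! (r - 1) \<le> ws ! j" using sorted assms len by (intro sorted_nth_mono) auto
      then show False using le j ws_def by auto
    qed
    then have "card {j. j < length ws \<and> ws ! j < s} \<le> card {..<r - 1}"
      by (intro card_mono) auto
    then show "length (filter (\<lambda>v. v < s) vs) < r" using count assms by simp
  next
    assume less: "length (filter (\<lambda>v. v < s) vs) < r"
    show "s \<le> sort vs ! (r - 1)"
    proof (rule ccontr)
      assume "\<not> s \<le> sort vs ! (r - 1)"
      then have last: "ws ! (r - 1) < s" unfolding ws_def by auto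
      have "{..<r} \<subseteq> {j. j < length ws \<and> ws ! j < s}"
      proof
        fix j assume "j \<in> {..<r}"
        then have "j \<le> r - 1" "j < length ws" using assms len by auto
        moreover from this have "ws ! j \<le> ws ! (r - 1)"
          using sorted assms len by (intro sorted_nth_mono) auto
        ultimately show "j \<in> {j. j < length ws \<and> ws ! j < s}" using last by auto
      qed
      then have "card {..<r} \<le> card {j. j < length ws \<and> ws ! j < s}"
        by (intro card_mono) auto
      then show False using less count by simp
    qed
  qed
qed

definition conformal_rank :: "real \<Rightarrow> nat \<Rightarrow> nat" where
  "conformal_rank \<alpha> m = nat \<lceil>(1 + real m) * (1 - \<alpha>)\<rceil>"

lemma conformal_rank_pos: "\<alpha> < 1 \<Longrightarrow> 1 \<le> conformal_rank \<alpha> m"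
proof -
  assume "\<alpha> < 1"
  then have "0 < (1 + real m) * (1 - \<alpha>)" by simp
  then show ?thesis unfolding conformal_rank_def by linarith
qed

lemma conformal_rank_le_Suc: "0 \<le> \<alpha> \<Longrightarrow> conformal_rank \<alpha> m \<le> Suc m"
proof -
  assume "0 \<le> \<alpha>"
  then have "(1 + real m) * (1 - \<alpha>) \<le> 1 + real m" by (simp add: mult_left_le)
  then have "\<lceil>(1 + real m) * (1 - \<alpha>)\<rceil> \<le> 1 + int m" by (simp add: ceiling_le_iff)
  then show ?thesis unfolding conformal_rank_def by linarith
qed

lemma conformal_rank_ge: "\<alpha> \<le> 1 \<Longrightarrow> (1 - \<alpha>) * (1 + real m) \<le> real (conformal_rank \<alpha> m)"
proof -
  assume "\<alpha> \<le> 1"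
  then have "0 \<le> (1 + real m) * (1 - \<alpha>)" by simp
  then have "0 \<le> \<lceil>(1 + real m) * (1 - \<alpha>)\<rceil>" by simp
  then show ?thesis
    using le_of_int_ceiling[of "(1 + real m) * (1 - \<alpha>)"]
    unfolding conformal_rank_def by (simp add: mult.commute)
qed

lemma conf_quantile_eq:
  "conf_quantile \<alpha> vs =
     (if length vs < conformal_rank \<alpha> (length vs) then 1
      else sort vs ! (conformal_rank \<alpha> (length vs) - 1))"
  by (simp add: conf_quantile_def conformal_rank_def Let_def)

lemma le_conf_quantile_iff:
  assumes "\<alpha> < 1"
  shows "s \<le> conf_quantile \<alpha> vs \<longleftrightarrow>
     (if conformal_rank \<alpha> (length vs) \<le> length vs
      then length (filter (\<lambda>v. v < s) vs) < conformal_rank \<alpha> (length vs) else s \<le> 1)"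
proof (cases "conformal_rank \<alpha> (length vs) \<le> length vs")
  case True
  then show ?thesis
    using le_sort_nth_iff_count_less[OF conformal_rank_pos[OF assms] True]
    by (simp add: conf_quantile_eq)
qed (simp add: conf_quantile_eq)

lemma conf_quantile_in_unit_interval:
  assumes "\<alpha> < 1" "set vs \<subseteq> {0..1}"
  shows "conf_quantile \<alpha> vs \<in> {0..1}"
proof (cases "length vs < conformal_rank \<alpha> (length vs)")
  case False
  then have "conformal_rank \<alpha> (length vs) - 1 < length (sort vs)"
    using conformal_rank_pos[OF assms(1), of "length vs"] by simp
  then have "sort vs ! (conformal_rank \<alpha> (length vs) - 1) \<in> set vs"
    by (metis nth_mem set_sort)
  then show ?thesis using False assms(2) by (auto simp: conf_quantile_eq)
qed (simp add: conf_quantile_eq)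

lemma card_rank_less_ge:
  fixes v :: "'a \<Rightarrow> 'b::linorder"
  assumes "finite S" "r \<le> card S"
  shows "r \<le> card {j\<in>S. card {i\<in>S. v i < v j} < r}"
proof (rule ccontr)
  define G where "G = {j\<in>S. card {i\<in>S. v i < v j} < r}"
  assume "\<not> r \<le> card {j\<in>S. card {i\<in>S. v i < v j} < r}"
  then have G: "card G < r" unfolding G_def by simp
  moreover have "finite G" using assms by (simp add: G_def)
  ultimately have "S - G \<noteq> {}"
    using assms card_mono[of G S] by auto
  moreover have "finite (S - G)" using assms by simp
  ultimately have "Min (v ` (S - G)) \<in> v ` (S - G)" by (intro Min_in) auto
  then obtain j0 where j0: "j0 \<in> S - G" "v j0 = Min (v ` (S - G))" by auto
  then have j0_min: "\<forall>j\<in>S - G. v j0 \<le> v j" using assms by simp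
  have "{i\<in>S. v i < v j0} \<subseteq> G" using j0_min by force
  then have "card {i\<in>S. v i < v j0} \<le> card G"
    using assms by (intro card_mono) (auto simp: G_def)
  moreover have "r \<le> card {i\<in>S. v i < v j0}" using j0 unfolding G_def by auto
  ultimately show False using G by linarith
qed

lemma exists_map_with_fiber_cards:
  fixes c :: "'l \<Rightarrow> nat"
  assumes "finite L" "finite A" "card A = (\<Sum>l\<in>L. c l)"
  shows "\<exists>f. f ` A \<subseteq> L \<and> (\<forall>l\<in>L. card {i\<in>A. f i = l} = c l)"
  using assms
proof (induction L arbitrary: A rule: finite_induct)
  case (insert l L)
  then have "c l \<le> card A" by simp
  then obtain B where B: "B \<subseteq> A" "card B = c l"
    using obtain_subset_with_card_n by blast
  then have "card (A - B) = (\<Sum>l\<in>L. c l)"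
    using insert by (simp add: card_Diff_subset finite_subset)
  then obtain f where f: "f ` (A - B) \<subseteq> L" "\<forall>l\<in>L. card {i\<in>A - B. f i = l} = c l"
    using insert by blast
  define g where "g i = (if i \<in> B then l else f i)" for i
  have g_l: "{i\<in>A. g i = l} = B" using f B insert(2) by (auto simp: g_def)
  have g_other: "{i\<in>A. g i = l'} = {i\<in>A - B. f i = l'}" if "l' \<noteq> l" for l'
    using that by (auto simp: g_def)
  have "\<forall>l'\<in>insert l L. card {i\<in>A. g i = l'} = c l'"
  proof
    fix l' assume "l' \<in> insert l L"
    show "card {i\<in>A. g i = l'} = c l'"
    proof (cases "l' = l")
      case True
      then show ?thesis using g_l B(2) by simp
    next
      case False
      then show ?thesis using \<open>l' \<in> insert l L\<close> g_other f(2) by simp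
    qed
  qed
  moreover have "g ` A \<subseteq> insert l L" using f by (auto simp: g_def)
  ultimately show ?case by blast
qed simp

lemma length_filter_map_filter:
  assumes "distinct xs"
  shows "length (filter P (map f (filter Q xs))) = card {i \<in> set xs. Q i \<and> P (f i)}"
proof -
  have "length (filter P (map f (filter Q xs))) = length (filter (\<lambda>i. Q i \<and> P (f i)) xs)"
    by (simp add: filter_map filter_filter o_def conj_commute)
  also have "\<dots> = card {i \<in> set xs. Q i \<and> P (f i)}"
    using assms by (subst distinct_length_filter) (auto intro!: arg_cong[where f=card])
  finally show ?thesis .
qed

lemma card_filter_eq_sum_indicator:
  assumes "finite J"
  shows "real (card {j\<in>J. f j \<in> A}) = (\<Sum>j\<in>J. indicator A (f j))"
proof -
  have "(\<Sum>j\<in>J. indicator A (f j) :: real) = (\<Sum>j\<in>J. if f j \<in> A then 1 else 0)"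
    by (intro sum.cong) (auto simp: indicator_def)
  also have "\<dots> = (\<Sum>j\<in>{j\<in>J. f j \<in> A}. 1)"
    by (rule sum.inter_filter[OF assms, symmetric])
  finally show ?thesis by simp
qed

section \<open>Label noise\<close>

lemma triple_space_rectangle:
  assumes "A \<in> sets borel"
  shows "{z. fst z \<in> A \<and> fst (snd z) \<in> L \<and> snd (snd z) \<in> L'} \<in> sets triple_space"
proof -
  have "{z. fst z \<in> A \<and> fst (snd z) \<in> L \<and> snd (snd z) \<in> L'} = A \<times> (L \<times> L')" by auto
  moreover have "L \<times> L' \<in> sets (count_space UNIV \<Otimes>\<^sub>M count_space UNIV)"
    by (rule pair_measureI) auto
  ultimately show ?thesis unfolding triple_space_def using assms by (simp add: pair_measureI)
qed

lemma space_triple_space: "space triple_space = UNIV"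
  by (simp add: triple_space_def space_pair_measure)

lemma measurable_true_label [measurable]:
  "(\<lambda>z. fst (snd z)) \<in> measurable triple_space (count_space UNIV)"
  unfolding triple_space_def by measurable

lemma measurable_obs_label [measurable]:
  "(\<lambda>z. snd (snd z)) \<in> measurable triple_space (count_space UNIV)"
  unfolding triple_space_def by measurable

lemma measurable_feature [measurable]: "fst \<in> measurable triple_space borel"
  unfolding triple_space_def by measurable

locale label_noise_model =
  fixes K :: nat and P :: "('x::topological_space \<times> nat \<times> nat) measure"
  assumes prob_space_P: "prob_space P"
    and sets_P: "sets P = sets triple_space"
    and true_label_range: "AE z in P. fst (snd z) \<in> {1..K}"
    and cond_indep: "cond_indep_obs P (sets borel)"
    and true_label_pos: "\<forall>l\<in>{1..K}. measure P {z \<in> space P. fst (snd z) = l} > 0"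
    and obs_label_pos: "\<forall>l\<in>{1..K}. measure P {z \<in> space P. snd (snd z) = l} > 0"
begin

interpretation prob_space P by (rule prob_space_P)

lemma space_P: "space P = UNIV"
  using sets_eq_imp_space_eq[OF sets_P] by (simp add: space_triple_space)

lemma rectangle_in_sets_P:
  "A \<in> sets borel \<Longrightarrow> {z. fst z \<in> A \<and> fst (snd z) \<in> L \<and> snd (snd z) \<in> L'} \<in> sets P"
  unfolding sets_P by (rule triple_space_rectangle)

lemma measure_obs_label_eq_sum:
  assumes A: "A \<in> sets borel"
  shows "measure P {z. fst z \<in> A \<and> snd (snd z) = k}
       = (\<Sum>l\<in>{1..K}. measure P {z. fst z \<in> A \<and> fst (snd z) = l \<and> snd (snd z) = k})"
proof -
  define E where "E l = {z. fst z \<in> A \<and> fst (snd z) = l \<and> snd (snd z) = k}" for l :: nat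
  have E: "E l \<in> sets P" for l
    using rectangle_in_sets_P[OF A, of "{l}" "{k}"] by (simp add: E_def)
  have "measure P {z. fst z \<in> A \<and> snd (snd z) = k} = measure P (\<Union>l\<in>{1..K}. E l)"
  proof (rule finite_measure_eq_AE)
    show "AE z in P. z \<in> {z. fst z \<in> A \<and> snd (snd z) = k} \<longleftrightarrow> z \<in> (\<Union>l\<in>{1..K}. E l)"
      using true_label_range by eventually_elim (auto simp: E_def)
    show "{z. fst z \<in> A \<and> snd (snd z) = k} \<in> sets P"
      using rectangle_in_sets_P[OF A, of UNIV "{k}"] by simp
  qed (use E in auto)
  also have "\<dots> = (\<Sum>l\<in>{1..K}. measure P (E l))"
  proof (rule finite_measure_finite_Union)
    show "disjoint_family_on E {1..K}" unfolding disjoint_family_on_def E_def by auto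
  qed (use E in auto)
  finally show ?thesis by (simp add: E_def)
qed

lemma obs_cdf_mixture:
  assumes g: "g \<in> borel_measurable borel"
  shows "measure P {z. g (fst z) \<le> t \<and> snd (snd z) = k}
       = (\<Sum>l\<in>{1..K}. cdf_true P g l t * measure P {z. fst (snd z) = l \<and> snd (snd z) = k})"
proof -
  define A where "A = {x. g x \<le> t}"
  have "{x \<in> space borel. g x \<le> t} \<in> sets borel" using g by measurable
  then have A: "A \<in> sets borel" by (simp add: A_def)
  have "measure P {z. fst z \<in> A \<and> fst (snd z) = l \<and> snd (snd z) = k}
      = cdf_true P g l t * measure P {z. fst (snd z) = l \<and> snd (snd z) = k}"
    if l: "l \<in> {1..K}" for l
  proof -
    define py where "py = measure P {z. fst (snd z) = l}"
    have "py > 0" using true_label_pos l by (simp add: py_def space_P)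
    have "py * measure P {z. fst z \<in> A \<and> fst (snd z) = l \<and> snd (snd z) = k}
        = measure P {z. fst z \<in> A \<and> fst (snd z) = l} * measure P {z. fst (snd z) = l \<and> snd (snd z) = k}"
      using cond_indep A unfolding cond_indep_obs_def py_def space_P by (simp add: mult.commute)
    also have "measure P {z. fst z \<in> A \<and> fst (snd z) = l} = py * cdf_true P g l t"
      using \<open>py > 0\<close> by (simp add: cdf_true_def py_def space_P A_def)
    finally show ?thesis using \<open>py > 0\<close> by (simp add: mult.assoc)
  qed
  then show ?thesis
    using measure_obs_label_eq_sum[OF A, of k] by (simp add: A_def)
qed

lemma cdf_obs_le_cdf_true:
  assumes g: "g \<in> borel_measurable borel" and k: "k \<in> {1..K}"
    and dominated: "\<forall>l\<in>{1..K}. cdf_true P g l t \<le> cdf_true P g k t"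
  shows "cdf_obs P g k t \<le> cdf_true P g k t"
proof -
  define po where "po = measure P {z. snd (snd z) = k}"
  have po: "po > 0" using obs_label_pos k by (simp add: po_def space_P)
  have po_eq: "po = (\<Sum>l\<in>{1..K}. measure P {z. fst (snd z) = l \<and> snd (snd z) = k})"
    using measure_obs_label_eq_sum[of UNIV k] by (simp add: po_def)
  have "measure P {z. g (fst z) \<le> t \<and> snd (snd z) = k}
      \<le> (\<Sum>l\<in>{1..K}. cdf_true P g k t * measure P {z. fst (snd z) = l \<and> snd (snd z) = k})"
    unfolding obs_cdf_mixture[OF g] using dominated by (intro sum_mono mult_right_mono) auto
  also have "\<dots> = cdf_true P g k t * po"
    by (simp add: po_eq sum_distrib_left)
  finally have "measure P {z. g (fst z) \<le> t \<and> snd (snd z) = k} \<le> cdf_true P g k t * po" .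
  then show ?thesis
    using po by (simp add: cdf_obs_def space_P po_def divide_le_eq)
qed

end

section \<open>The label-conditional conformal procedure\<close>

lemma conf_score_in_unit_interval:
  assumes "prediction_function K C" "k \<in> {1..K}"
  shows "conf_score C D x k \<in> {0..1}"
proof -
  define S where "S = {t \<in> {0..1::real}. k \<in> C D x (\<lambda>_. t)}"
  have "(\<lambda>_. 1::real) \<in> tau_box K" by (simp add: tau_box_def)
  moreover have "\<forall>D x \<tau> k. \<tau> \<in> tau_box K \<longrightarrow> k \<in> {1..K} \<longrightarrow> \<tau> k = 1 \<longrightarrow> k \<in> C D x \<tau>"
    using assms(1) unfolding prediction_function_def by (elim conjE)
  ultimately have "k \<in> C D x (\<lambda>_. 1)" using assms(2) by blast
  then have "1 \<in> S" unfolding S_def by simp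
  moreover have "bdd_below S" unfolding S_def by (rule bdd_belowI[of _ 0]) auto
  ultimately have "Inf S \<le> 1" by (rule cInf_lower)
  moreover have "0 \<le> Inf S" using \<open>1 \<in> S\<close> by (intro cInf_greatest) (auto simp: S_def)
  ultimately have "Inf S \<in> {0..1}" by simp
  then show ?thesis unfolding conf_score_def S_def .
qed

text \<open>A data vector assigns to each index a triple (feature, true label, observed label);
  the procedure only sees features and observed labels.\<close>
type_synonym 'x data_vector = "nat \<Rightarrow> 'x \<times> nat \<times> nat"

locale contaminated_conformal =
  fixes K n :: nat and \<alpha> :: real
    and M :: "'w measure"
    and X :: "nat \<Rightarrow> 'w \<Rightarrow> real ^ 'd"
    and Y Yt :: "nat \<Rightarrow> 'w \<Rightarrow> nat"
    and T :: "nat set"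
    and nk :: "nat \<Rightarrow> nat"
    and C :: "(real ^ 'd) tdata \<Rightarrow> real ^ 'd \<Rightarrow> (nat \<Rightarrow> real) \<Rightarrow> nat set"
    and P :: "((real ^ 'd) \<times> nat \<times> nat) measure"
  assumes alpha: "0 < \<alpha>" "\<alpha> < 1"
    and prob_space_M: "prob_space M"
    and indep: "prob_space.indep_vars M (\<lambda>_. triple_space) (\<lambda>i \<omega>. (X i \<omega>, Y i \<omega>, Yt i \<omega>)) {1..Suc n}"
    and ident: "\<forall>i\<in>{1..Suc n}. distr M triple_space (\<lambda>\<omega>. (X i \<omega>, Y i \<omega>, Yt i \<omega>)) = P"
    and label_ranges: "\<forall>i\<in>{1..Suc n}. \<forall>\<omega>\<in>space M. Y i \<omega> \<in> {1..K} \<and> Yt i \<omega> \<in> {1..K}"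
    and cond_indep: "cond_indep_obs P (sets borel)"
    and true_label_pos: "\<forall>l\<in>{1..K}. measure P {z \<in> space P. fst (snd z) = l} > 0"
    and obs_label_pos: "\<forall>l\<in>{1..K}. measure P {z \<in> space P. snd (snd z) = l} > 0"
    and train_subset: "T \<subseteq> {1..n}"
    and counts_sum: "(\<Sum>k\<in>{1..K}. nk k) = card ({1..n} - T)"
    and prediction_fun: "prediction_function K C"
    and consistent: "score_consistent K C"
    and score_measurable: "\<forall>k\<in>{1..K}. (\<lambda>p. conf_score C (fst p) (snd p) k)
            \<in> borel_measurable (PiM T (\<lambda>_. (borel :: (real ^ 'd) measure) \<Otimes>\<^sub>M count_space UNIV) \<Otimes>\<^sub>M borel)"
begin

definition triple :: "nat \<Rightarrow> 'w \<Rightarrow> (real ^ 'd) \<times> nat \<times> nat" where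
  "triple i \<omega> = (X i \<omega>, Y i \<omega>, Yt i \<omega>)"

definition idx :: "nat set" where "idx = {1..Suc n}"

definition cal :: "nat set" where "cal = {1..n} - T"

definition obs_label :: "(real ^ 'd) data_vector \<Rightarrow> nat \<Rightarrow> nat" where
  "obs_label d i = snd (snd (d i))"

definition train :: "(real ^ 'd) data_vector \<Rightarrow> (real ^ 'd) tdata" where
  "train d = restrict (\<lambda>i. (fst (d i), obs_label d i)) T"

definition score :: "(real ^ 'd) data_vector \<Rightarrow> real ^ 'd \<Rightarrow> nat \<Rightarrow> real" where
  "score d x k = conf_score C (train d) x k"

definition cal_scores :: "(real ^ 'd) data_vector \<Rightarrow> nat \<Rightarrow> real list" where
  "cal_scores d k =
     map (\<lambda>i. score d (fst (d i)) k) (filter (\<lambda>i. obs_label d i = k) (sorted_list_of_set cal))"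

definition threshold :: "(real ^ 'd) data_vector \<Rightarrow> nat \<Rightarrow> real" where
  "threshold d k = conf_quantile \<alpha> (cal_scores d k)"

definition label_count :: "(real ^ 'd) data_vector \<Rightarrow> nat \<Rightarrow> nat" where
  "label_count d k = card {i\<in>cal. obs_label d i = k}"

definition count_below :: "(real ^ 'd) data_vector \<Rightarrow> nat \<Rightarrow> real \<Rightarrow> nat" where
  "count_below d k s = card {i\<in>cal. obs_label d i = k \<and> score d (fst (d i)) k < s}"

definition has_counts :: "(real ^ 'd) data_vector \<Rightarrow> bool" where
  "has_counts d \<longleftrightarrow> (\<forall>l\<in>{1..K}. label_count d l = nk l)"

lemma finite_cal: "finite cal"
  by (simp add: cal_def)

lemma length_cal_scores: "length (cal_scores d k) = label_count d k"
  unfolding cal_scores_def label_count_def using finite_cal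
  by (simp add: distinct_length_filter Int_def conj_commute)

lemma le_threshold_iff:
  "s \<le> threshold d k \<longleftrightarrow>
     (if conformal_rank \<alpha> (label_count d k) \<le> label_count d k
      then count_below d k s < conformal_rank \<alpha> (label_count d k) else s \<le> 1)"
proof -
  have "length (filter (\<lambda>v. v < s) (cal_scores d k)) = count_below d k s"
    unfolding cal_scores_def count_below_def using finite_cal
    by (subst length_filter_map_filter) auto
  then show ?thesis
    unfolding threshold_def le_conf_quantile_iff[OF alpha(2)] length_cal_scores by simp
qed

lemma threshold_in_unit_interval:
  assumes "k \<in> {1..K}"
  shows "threshold d k \<in> {0..1}"
proof -
  have "\<forall>D x. conf_score C D x k \<in> {0..1}"
    using conf_score_in_unit_interval[OF prediction_fun assms] by blast
  then have "set (cal_scores d k) \<subseteq> {0..1}" unfolding cal_scores_def score_def by auto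
  then show ?thesis
    unfolding threshold_def using alpha(2) by (rule conf_quantile_in_unit_interval[rotated])
qed

abbreviation data_space :: "nat set \<Rightarrow> (real ^ 'd) data_vector measure" where
  "data_space J \<equiv> PiM J (\<lambda>_. triple_space)"

abbreviation train_space :: "(real ^ 'd) tdata measure" where
  "train_space \<equiv> PiM T (\<lambda>_. borel \<Otimes>\<^sub>M count_space UNIV)"

lemma measurable_obs_label_data [measurable]:
  "i \<in> J \<Longrightarrow> (\<lambda>d. obs_label d i) \<in> measurable (data_space J) (count_space UNIV)"
  unfolding obs_label_def by measurable

lemma measurable_feature_data [measurable]:
  "i \<in> J \<Longrightarrow> (\<lambda>d. fst (d i)) \<in> borel_measurable (data_space J)"
  by measurable

lemma measurable_train: "T \<subseteq> J \<Longrightarrow> train \<in> measurable (data_space J) train_space"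
  unfolding train_def by (rule measurable_restrict) auto

lemma measurable_score:
  assumes "T \<subseteq> J" "k \<in> {1..K}" "F \<in> measurable N (data_space J)" "G \<in> borel_measurable N"
  shows "(\<lambda>\<omega>. score (F \<omega>) (G \<omega>) k) \<in> borel_measurable N"
proof -
  have "(\<lambda>\<omega>. (train (F \<omega>), G \<omega>)) \<in> measurable N (train_space \<Otimes>\<^sub>M borel)"
    using measurable_train[OF assms(1)] assms(3,4) by measurable
  moreover have "(\<lambda>p. conf_score C (fst p) (snd p) k) \<in> borel_measurable (train_space \<Otimes>\<^sub>M borel)"
    using score_measurable assms(2) by blast
  ultimately have "(\<lambda>p. conf_score C (fst p) (snd p) k) \<circ> (\<lambda>\<omega>. (train (F \<omega>), G \<omega>))
      \<in> borel_measurable N"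
    by (rule measurable_comp)
  then show ?thesis by (simp add: score_def o_def)
qed

lemma measurable_label_count:
  assumes "cal \<subseteq> J" "F \<in> measurable N (data_space J)"
  shows "(\<lambda>\<omega>. label_count (F \<omega>) k) \<in> measurable N (count_space UNIV)"
  unfolding label_count_def
proof (rule measurable_card)
  fix i
  have "Measurable.pred N (\<lambda>\<omega>. obs_label (F \<omega>) i = k)" if "i \<in> cal"
  proof -
    have "i \<in> J" using that assms(1) by auto
    then show ?thesis using assms(2) by measurable
  qed
  then show "{\<omega> \<in> space N. i \<in> {i \<in> cal. obs_label (F \<omega>) i = k}} \<in> sets N"
    by (cases "i \<in> cal") (simp_all add: pred_def)
qed

lemma measurable_count_below:
  assumes "T \<subseteq> J" "cal \<subseteq> J" "k \<in> {1..K}" "F \<in> measurable N (data_space J)"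
    "G \<in> borel_measurable N"
  shows "(\<lambda>\<omega>. count_below (F \<omega>) k (G \<omega>)) \<in> measurable N (count_space UNIV)"
  unfolding count_below_def
proof (rule measurable_card)
  fix i
  have "Measurable.pred N (\<lambda>\<omega>. obs_label (F \<omega>) i = k \<and> score (F \<omega>) (fst (F \<omega> i)) k < G \<omega>)"
    if "i \<in> cal"
  proof -
    have "i \<in> J" using that assms(2) by auto
    then have "(\<lambda>\<omega>. score (F \<omega>) (fst (F \<omega> i)) k) \<in> borel_measurable N"
      using assms(4) by (intro measurable_score[OF assms(1,3,4)]) measurable
    then show ?thesis using assms(4,5) \<open>i \<in> J\<close> by measurable
  qed
  then show "{\<omega> \<in> space N. i \<in> {i \<in> cal. obs_label (F \<omega>) i = k
      \<and> score (F \<omega>) (fst (F \<omega> i)) k < G \<omega>}} \<in> sets N"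
    by (cases "i \<in> cal") (simp_all add: pred_def)
qed

lemma pred_le_threshold:
  assumes "T \<subseteq> J" "cal \<subseteq> J" "k \<in> {1..K}" "F \<in> measurable N (data_space J)"
    "G \<in> borel_measurable N"
  shows "Measurable.pred N (\<lambda>\<omega>. score (F \<omega>) (G \<omega>) k \<le> threshold (F \<omega>) k)"
proof -
  define s where "s \<omega> = score (F \<omega>) (G \<omega>) k" for \<omega>
  have s: "s \<in> borel_measurable N"
    unfolding s_def by (rule measurable_score[OF assms(1,3,4,5)])
  have "Measurable.pred N (\<lambda>\<omega>.
      if conformal_rank \<alpha> m \<le> m then c < conformal_rank \<alpha> m else s \<omega> \<le> 1)" for m c
    using s by measurable
  then have "Measurable.pred N (\<lambda>\<omega>. if conformal_rank \<alpha> m \<le> m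
      then count_below (F \<omega>) k (s \<omega>) < conformal_rank \<alpha> m else s \<omega> \<le> 1)" for m
    by (rule measurable_compose_countable[OF _ measurable_count_below[OF assms(1-4) s]])
  then have "Measurable.pred N (\<lambda>\<omega>. if conformal_rank \<alpha> (label_count (F \<omega>) k) \<le> label_count (F \<omega>) k
      then count_below (F \<omega>) k (s \<omega>) < conformal_rank \<alpha> (label_count (F \<omega>) k) else s \<omega> \<le> 1)"
    by (rule measurable_compose_countable[OF _ measurable_label_count[OF assms(2,4)]])
  then show ?thesis unfolding le_threshold_iff s_def .
qed

lemma pred_has_counts:
  assumes "cal \<subseteq> J" "F \<in> measurable N (data_space J)"
  shows "Measurable.pred N (\<lambda>\<omega>. has_counts (F \<omega>))"
  unfolding has_counts_def
proof (rule pred_intros_finite(3))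
  show "Measurable.pred N (\<lambda>\<omega>. label_count (F \<omega>) l = nk l)" for l
    by (rule pred_count_space_const1[OF measurable_label_count[OF assms]])
qed simp

lemma measurable_triple: "i \<in> idx \<Longrightarrow> triple i \<in> measurable M triple_space"
  using indep unfolding prob_space.indep_vars_def[OF prob_space_M]
  by (auto simp: idx_def triple_def[abs_def])

lemma distr_triple: "i \<in> idx \<Longrightarrow> distr M triple_space (triple i) = P"
  using ident by (simp add: idx_def triple_def[abs_def])

lemma one_in_idx: "1 \<in> idx"
  by (simp add: idx_def)

lemma prob_space_P: "prob_space P"
proof -
  have "prob_space (distr M triple_space (triple 1))"
    by (rule prob_space.prob_space_distr[OF prob_space_M measurable_triple[OF one_in_idx]])
  then show ?thesis by (simp only: distr_triple[OF one_in_idx])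
qed

lemma sets_P: "sets P = sets triple_space"
  by (simp flip: distr_triple[OF one_in_idx])

lemma true_label_range_P: "AE z in P. fst (snd z) \<in> {1..K}"
proof -
  have "AE \<omega> in M. fst (snd (triple 1 \<omega>)) \<in> {1..K}"
    using label_ranges by (intro AE_I2) (auto simp: triple_def)
  then show ?thesis
    unfolding distr_triple[OF one_in_idx, symmetric]
    by (subst AE_distr_iff[OF measurable_triple[OF one_in_idx]]) auto
qed

sublocale label_noise_model K P
  using prob_space_P sets_P true_label_range_P cond_indep true_label_pos obs_label_pos
  by (rule label_noise_model.intro)

section \<open>Exchangeability of the observed labels\<close>

definition pool :: "nat set" where "pool = insert (Suc n) cal"

definition swap_test :: "nat \<Rightarrow> (nat \<Rightarrow> 'a) \<Rightarrow> nat \<Rightarrow> 'a" where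
  "swap_test j z = (\<lambda>i\<in>idx. z (Transposition.transpose j (Suc n) i))"

definition obs_label_event :: "nat \<Rightarrow> (real ^ 'd) data_vector set" where
  "obs_label_event k = {z \<in> space (data_space idx). obs_label z (Suc n) = k \<and> has_counts z}"

definition obs_cover_event :: "nat \<Rightarrow> (real ^ 'd) data_vector set" where
  "obs_cover_event k = {z \<in> obs_label_event k. score z (fst (z (Suc n))) k \<le> threshold z k}"

lemma cal_subset_idx: "cal \<subseteq> idx"
  by (auto simp: cal_def idx_def)

lemma train_subset_idx: "T \<subseteq> idx"
  using train_subset by (auto simp: idx_def)

lemma test_in_idx: "Suc n \<in> idx"
  by (simp add: idx_def)

lemma test_notin_cal: "Suc n \<notin> cal"
  by (simp add: cal_def)

lemma pool_subset_idx: "pool \<subseteq> idx"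
  using cal_subset_idx test_in_idx by (simp add: pool_def)

lemma finite_pool: "finite pool"
  by (simp add: pool_def finite_cal)

lemma transpose_train: "j \<in> pool \<Longrightarrow> i \<in> T \<Longrightarrow> Transposition.transpose j (Suc n) i = i"
  using train_subset by (auto simp: pool_def cal_def Transposition.transpose_def)

lemma bij_betw_transpose_cal: "j \<in> pool \<Longrightarrow> bij_betw (Transposition.transpose j (Suc n)) cal (pool - {j})"
  by (rule bij_betw_imageI) (auto simp: pool_def Transposition.transpose_def test_notin_cal)

lemma card_cal_transpose:
  "j \<in> pool \<Longrightarrow> card {i\<in>cal. Q (Transposition.transpose j (Suc n) i)} = card {i\<in>pool - {j}. Q i}"
  by (rule bij_betw_same_card[OF bij_betw_Collect[OF bij_betw_transpose_cal]]) auto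

lemma swap_test_in_space: "swap_test j z \<in> space (data_space idx)"
  by (simp add: swap_test_def space_PiM space_triple_space)

lemma train_swap_test: "j \<in> pool \<Longrightarrow> train (swap_test j z) = train z"
  unfolding train_def obs_label_def swap_test_def
  using train_subset_idx transpose_train by (intro restrict_ext) auto

lemma score_swap_test: "j \<in> pool \<Longrightarrow> score (swap_test j z) = score z"
  by (simp add: score_def[abs_def] train_swap_test)

lemma card_cal_swap_test:
  assumes "j \<in> pool"
  shows "card {i\<in>cal. Q (obs_label (swap_test j z) i) (fst (swap_test j z i))}
       = card {i\<in>pool - {j}. Q (obs_label z i) (fst (z i))}"
proof -
  have "{i\<in>cal. Q (obs_label (swap_test j z) i) (fst (swap_test j z i))}
      = {i\<in>cal. Q (obs_label z (Transposition.transpose j (Suc n) i)) (fst (z (Transposition.transpose j (Suc n) i)))}"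
    using cal_subset_idx by (auto simp: obs_label_def swap_test_def)
  then show ?thesis
    using card_cal_transpose[OF assms, of "\<lambda>i. Q (obs_label z i) (fst (z i))"] by simp
qed

lemma label_count_swap_test:
  "j \<in> pool \<Longrightarrow> label_count (swap_test j z) l = card {i\<in>pool - {j}. obs_label z i = l}"
  unfolding label_count_def using card_cal_swap_test[where Q="\<lambda>a b. a = l"] by simp

lemma count_below_swap_test:
  "j \<in> pool \<Longrightarrow> count_below (swap_test j z) k s
     = card {i\<in>pool - {j}. obs_label z i = k \<and> score z (fst (z i)) k < s}"
  unfolding count_below_def
  using card_cal_swap_test[where Q="\<lambda>a b. a = k \<and> score z b k < s"] by (simp add: score_swap_test)

lemma swap_test_test: "swap_test j z (Suc n) = z j"
  by (simp add: swap_test_def test_in_idx)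

lemma swap_test_in_obs_label_event:
  "j \<in> pool \<Longrightarrow> swap_test j z \<in> obs_label_event k \<longleftrightarrow>
     obs_label z j = k \<and> (\<forall>l\<in>{1..K}. card {i\<in>pool - {j}. obs_label z i = l} = nk l)"
  using swap_test_in_space
  by (simp add: obs_label_event_def has_counts_def label_count_swap_test swap_test_test obs_label_def)

lemma swap_test_in_obs_cover_event:
  fixes z :: "(real ^ 'd) data_vector" and k :: nat
  assumes "j \<in> pool"
  defines "m \<equiv> card {i\<in>pool - {j}. obs_label z i = k}"
  shows "swap_test j z \<in> obs_cover_event k \<longleftrightarrow> swap_test j z \<in> obs_label_event k \<and>
     (if conformal_rank \<alpha> m \<le> m
      then card {i\<in>pool - {j}. obs_label z i = k \<and> score z (fst (z i)) k < score z (fst (z j)) k}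
             < conformal_rank \<alpha> m
      else score z (fst (z j)) k \<le> 1)"
  using assms unfolding obs_cover_event_def le_threshold_iff
  by (simp add: label_count_swap_test[unfolded label_count_def] label_count_def
      count_below_swap_test score_swap_test swap_test_test)

lemma swaps_in_obs_label_event:
  assumes j0: "j0 \<in> pool" "swap_test j0 z \<in> obs_label_event k" and k: "k \<in> {1..K}"
  shows "{j\<in>pool. swap_test j z \<in> obs_label_event k} = {j\<in>pool. obs_label z j = k}"
    and "card {j\<in>pool. obs_label z j = k} = Suc (nk k)"
proof -
  define S where "S = {j\<in>pool. obs_label z j = k}"
  have "finite S" using finite_pool by (simp add: S_def)
  have "j0 \<in> S" using j0 swap_test_in_obs_label_event by (simp add: S_def)
  have card_others: "card {i\<in>pool - {j}. obs_label z i = l} =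
      (if l = k then card S - 1 else card {i\<in>pool. obs_label z i = l})" if "j \<in> S" for j l
  proof (cases "l = k")
    case True
    then have "{i\<in>pool - {j}. obs_label z i = l} = S - {j}" by (auto simp: S_def)
    then show ?thesis using True that \<open>finite S\<close> by simp
  next
    case False
    then have "{i\<in>pool - {j}. obs_label z i = l} = {i\<in>pool. obs_label z i = l}"
      using that by (auto simp: S_def)
    then show ?thesis using False by simp
  qed
  have counts_j0: "\<forall>l\<in>{1..K}. card {i\<in>pool - {j0}. obs_label z i = l} = nk l"
    using j0 swap_test_in_obs_label_event by simp
  then have "card S - 1 = nk k" using k card_others[OF \<open>j0 \<in> S\<close>, of k] by simp
  moreover have "card S \<noteq> 0" using \<open>j0 \<in> S\<close> \<open>finite S\<close> by auto
  ultimately show "card {j\<in>pool. obs_label z j = k} = Suc (nk k)"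
    unfolding S_def[symmetric] by linarith
  have "swap_test j z \<in> obs_label_event k \<longleftrightarrow> j \<in> S" if "j \<in> pool" for j
  proof
    assume "swap_test j z \<in> obs_label_event k"
    then show "j \<in> S" using that swap_test_in_obs_label_event by (simp add: S_def)
  next
    assume "j \<in> S"
    then have "\<forall>l\<in>{1..K}. card {i\<in>pool - {j}. obs_label z i = l} = nk l"
      using counts_j0 card_others[OF \<open>j0 \<in> S\<close>] card_others[OF \<open>j \<in> S\<close>] by simp
    then show "swap_test j z \<in> obs_label_event k"
      using that \<open>j \<in> S\<close> swap_test_in_obs_label_event by (simp add: S_def)
  qed
  then show "{j\<in>pool. swap_test j z \<in> obs_label_event k} = S" by (auto simp: S_def)
qed

text \<open>The deterministic core of conformal validity: when the test point is exchanged with each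
  calibration point of the same observed label in turn, at least \<open>\<lceil>(1 + m)(1 - \<alpha>)\<rceil>\<close> of the
  \<open>m + 1\<close> exchanged data sets cover the test point.\<close>
lemma swap_count_le:
  assumes k: "k \<in> {1..K}"
  shows "conformal_rank \<alpha> (nk k) * card {j\<in>pool. swap_test j z \<in> obs_label_event k}
       \<le> Suc (nk k) * card {j\<in>pool. swap_test j z \<in> obs_cover_event k}"
proof (cases "\<exists>j0\<in>pool. swap_test j0 z \<in> obs_label_event k")
  case True
  then obtain j0 where j0: "j0 \<in> pool" "swap_test j0 z \<in> obs_label_event k" by blast
  define m where "m = nk k"
  define r where "r = conformal_rank \<alpha> m"
  define S where "S = {j\<in>pool. obs_label z j = k}"
  define v where "v i = score z (fst (z i)) k" for i
  note label_event = swaps_in_obs_label_event[OF j0 k, folded S_def m_def]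
  have "finite S" using finite_pool by (simp add: S_def)
  have m_others: "card {i\<in>pool - {j}. obs_label z i = k} = m" if "j \<in> S" for j
  proof -
    have "{i\<in>pool - {j}. obs_label z i = k} = S - {j}" by (auto simp: S_def)
    then show ?thesis using that label_event(2) \<open>finite S\<close> by simp
  qed
  have cover: "swap_test j z \<in> obs_cover_event k"
    if "j \<in> S" "if r \<le> m then card {i\<in>S. v i < v j} < r else v j \<le> 1" for j
  proof -
    have "j \<in> pool" "swap_test j z \<in> obs_label_event k"
      using that label_event(1) by (auto simp: S_def)
    moreover have "{i\<in>pool - {j}. obs_label z i = k \<and> score z (fst (z i)) k < score z (fst (z j)) k}
        = {i\<in>S. v i < v j}"
      by (auto simp: S_def v_def)
    ultimately show ?thesis
      unfolding swap_test_in_obs_cover_event[OF \<open>j \<in> pool\<close>] m_others[OF that(1)]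
      using that(2) unfolding r_def v_def by simp
  qed
  have "r \<le> card {j\<in>S. if r \<le> m then card {i\<in>S. v i < v j} < r else v j \<le> 1}"
  proof (cases "r \<le> m")
    case True
    then show ?thesis
      using card_rank_less_ge[OF \<open>finite S\<close>, of r v] label_event(2) by simp
  next
    case False
    have "v j \<le> 1" for j
      using conf_score_in_unit_interval[OF prediction_fun k] by (simp add: v_def score_def)
    then show ?thesis
      using False label_event(2) conformal_rank_le_Suc[of \<alpha> m] alpha by (simp add: r_def)
  qed
  also have "\<dots> \<le> card {j\<in>pool. swap_test j z \<in> obs_cover_event k}"
    using finite_pool cover by (intro card_mono) (auto simp: S_def)
  finally have "r * Suc m \<le> card {j\<in>pool. swap_test j z \<in> obs_cover_event k} * Suc m"
    by (rule mult_le_mono1)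
  then show ?thesis
    using label_event unfolding r_def m_def by (simp add: mult.commute)
next
  case False
  then have "{j\<in>pool. swap_test j z \<in> obs_label_event k} = {}" by auto
  then show ?thesis by (simp only: card.empty mult_0_right zero_le)
qed

abbreviation sample_law :: "(real ^ 'd) data_vector measure" where
  "sample_law \<equiv> PiM idx (\<lambda>_. P)"

lemma prob_space_sample_law: "prob_space sample_law"
  by (rule prob_space_PiM) (rule prob_space_P)

lemma sets_sample_law: "sets sample_law = sets (data_space idx)"
  by (rule sets_PiM_cong) (auto simp: sets_P)

lemma transpose_in_idx: "j \<in> pool \<Longrightarrow> i \<in> idx \<Longrightarrow> Transposition.transpose j (Suc n) i \<in> idx"
  using pool_subset_idx test_in_idx by (auto simp: Transposition.transpose_def)

lemma measurable_swap_test: "j \<in> pool \<Longrightarrow> swap_test j \<in> measurable sample_law sample_law"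
  unfolding swap_test_def
  by (intro measurable_restrict measurable_component_singleton transpose_in_idx)

lemma distr_swap_test:
  assumes "j \<in> pool"
  shows "distr sample_law sample_law (swap_test j) = sample_law"
proof -
  have "Transposition.transpose j (Suc n) \<in> idx \<rightarrow> idx"
    using transpose_in_idx[OF assms] by blast
  then show ?thesis
    using distr_PiM_reindex[OF prob_space_P inj_on_transpose] by (simp add: swap_test_def[abs_def])
qed

lemma obs_label_event_sets: "obs_label_event k \<in> sets sample_law"
proof -
  have "Measurable.pred (data_space idx) (\<lambda>z. has_counts z)"
    using pred_has_counts[OF cal_subset_idx, of "\<lambda>z. z"] by simp
  then have "Measurable.pred (data_space idx) (\<lambda>z. obs_label z (Suc n) = k \<and> has_counts z)"
    using test_in_idx by measurable
  then show ?thesis by (simp add: obs_label_event_def sets_sample_law pred_def)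
qed

lemma obs_cover_event_sets: "k \<in> {1..K} \<Longrightarrow> obs_cover_event k \<in> sets sample_law"
proof -
  assume k: "k \<in> {1..K}"
  have "Measurable.pred (data_space idx) (\<lambda>z. score z (fst (z (Suc n))) k \<le> threshold z k)"
    using test_in_idx by (intro pred_le_threshold[OF train_subset_idx cal_subset_idx k]) auto
  then have "{z \<in> space (data_space idx). score z (fst (z (Suc n))) k \<le> threshold z k}
      \<in> sets sample_law"
    by (simp add: sets_sample_law pred_def)
  moreover have "obs_cover_event k = obs_label_event k
      \<inter> {z \<in> space (data_space idx). score z (fst (z (Suc n))) k \<le> threshold z k}"
    by (auto simp: obs_cover_event_def obs_label_event_def)
  ultimately show ?thesis
    using obs_label_event_sets by simp
qed

lemma integral_card_swaps:
  assumes A: "A \<in> sets sample_law"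
  shows "integrable sample_law (\<lambda>z. real (card {j\<in>pool. swap_test j z \<in> A}))"
    and "(\<integral>z. real (card {j\<in>pool. swap_test j z \<in> A}) \<partial>sample_law)
       = card pool * measure sample_law A"
proof -
  interpret Q: prob_space sample_law by (rule prob_space_sample_law)
  have swap: "(\<integral>z. indicator A (swap_test j z) \<partial>sample_law) = measure sample_law A"
    and swap_int: "integrable sample_law (\<lambda>z. indicator A (swap_test j z) :: real)"
    if "j \<in> pool" for j
  proof -
    have "integrable (distr sample_law sample_law (swap_test j)) (indicator A :: _ \<Rightarrow> real)"
      using A by (simp add: distr_swap_test[OF that] Q.emeasure_eq_measure)
    then show "integrable sample_law (\<lambda>z. indicator A (swap_test j z) :: real)"
      using A by (simp add: integrable_distr_eq[OF measurable_swap_test[OF that]])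
    show "(\<integral>z. indicator A (swap_test j z) \<partial>sample_law) = measure sample_law A"
      using A integral_distr[OF measurable_swap_test[OF that], of "indicator A :: _ \<Rightarrow> real"]
      by (simp add: distr_swap_test[OF that])
  qed
  show "integrable sample_law (\<lambda>z. real (card {j\<in>pool. swap_test j z \<in> A}))"
    unfolding card_filter_eq_sum_indicator[OF finite_pool] using swap_int by simp
  show "(\<integral>z. real (card {j\<in>pool. swap_test j z \<in> A}) \<partial>sample_law) = card pool * measure sample_law A"
    unfolding card_filter_eq_sum_indicator[OF finite_pool]
    by (simp add: integral_sum swap_int swap)
qed

lemma obs_conformal_coverage:
  assumes k: "k \<in> {1..K}"
  shows "(1 - \<alpha>) * measure sample_law (obs_label_event k) \<le> measure sample_law (obs_cover_event k)"
proof -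
  define m where "m = nk k"
  define r where "r = real (conformal_rank \<alpha> m)"
  have pointwise: "r * real (card {j\<in>pool. swap_test j z \<in> obs_label_event k})
      \<le> (1 + real m) * real (card {j\<in>pool. swap_test j z \<in> obs_cover_event k})" for z
  proof -
    have "real (conformal_rank \<alpha> m * card {j\<in>pool. swap_test j z \<in> obs_label_event k})
        \<le> real (Suc m * card {j\<in>pool. swap_test j z \<in> obs_cover_event k})"
      using swap_count_le[OF k, of z] unfolding m_def of_nat_le_iff .
    then show ?thesis by (simp add: r_def algebra_simps)
  qed
  have "card pool * (r * measure sample_law (obs_label_event k))
      = (\<integral>z. r * real (card {j\<in>pool. swap_test j z \<in> obs_label_event k}) \<partial>sample_law)"
    using integral_card_swaps[OF obs_label_event_sets] by simp
  also have "\<dots> \<le> (\<integral>z. (1 + real m) * real (card {j\<in>pool. swap_test j z \<in> obs_cover_event k}) \<partial>sample_law)"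
    using integral_card_swaps(1)[OF obs_label_event_sets] integral_card_swaps(1)[OF obs_cover_event_sets[OF k]]
    by (intro integral_mono integrable_mult_right pointwise)
  also have "\<dots> = card pool * ((1 + real m) * measure sample_law (obs_cover_event k))"
    using integral_card_swaps[OF obs_cover_event_sets[OF k]] by simp
  finally have "r * measure sample_law (obs_label_event k)
      \<le> (1 + real m) * measure sample_law (obs_cover_event k)"
    using finite_pool by (simp add: pool_def card_gt_0_iff)
  moreover have "(1 + real m) * ((1 - \<alpha>) * measure sample_law (obs_label_event k))
      \<le> r * measure sample_law (obs_label_event k)"
    using conformal_rank_ge[of \<alpha> m] alpha
    by (subst mult.assoc[symmetric], intro mult_right_mono) (auto simp: r_def mult.commute)
  ultimately have "(1 + real m) * ((1 - \<alpha>) * measure sample_law (obs_label_event k))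
      \<le> (1 + real m) * measure sample_law (obs_cover_event k)"
    by linarith
  then show ?thesis by (rule mult_left_le_imp_le) simp
qed

section \<open>Independence of the past and the test point\<close>

definition all_data :: "'w \<Rightarrow> (real ^ 'd) data_vector" where
  "all_data \<omega> = (\<lambda>i\<in>idx. triple i \<omega>)"

definition past_data :: "'w \<Rightarrow> (real ^ 'd) data_vector" where
  "past_data \<omega> = (\<lambda>i\<in>{1..n}. triple i \<omega>)"

definition test_data :: "'w \<Rightarrow> (real ^ 'd) data_vector" where
  "test_data \<omega> = (\<lambda>i\<in>{Suc n}. triple i \<omega>)"

abbreviation past_space :: "(real ^ 'd) data_vector measure" where
  "past_space \<equiv> data_space {1..n}"

abbreviation test_space :: "(real ^ 'd) data_vector measure" where
  "test_space \<equiv> data_space {Suc n}"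

abbreviation test_law :: "(real ^ 'd) data_vector measure" where
  "test_law \<equiv> PiM {Suc n} (\<lambda>_. P)"

lemma agree_on_past:
  assumes "\<forall>i\<in>{1..n}. d i = d' i"
  shows "train d = train d'" "has_counts d = has_counts d'" "score d = score d'"
    "threshold d = threshold d'"
proof -
  show train: "train d = train d'"
    unfolding train_def obs_label_def using assms train_subset by (intro restrict_ext) auto
  have cal: "\<forall>i\<in>cal. d i = d' i" using assms by (auto simp: cal_def)
  then have "label_count d = label_count d'"
    by (intro ext) (auto simp: label_count_def obs_label_def intro!: arg_cong[where f=card])
  then show "has_counts d = has_counts d'" by (simp add: has_counts_def)
  show score: "score d = score d'" by (intro ext) (simp add: score_def train)
  have "cal_scores d k = cal_scores d' k" for k
    unfolding cal_scores_def using cal finite_cal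
    by (intro map_cong filter_cong) (auto simp: obs_label_def score)
  then show "threshold d = threshold d'" by (simp add: threshold_def[abs_def])
qed

lemma train_data_eq: "train_data X Yt T \<omega> = train (past_data \<omega>)"
  unfolding train_data_def train_def obs_label_def past_data_def triple_def using train_subset
  by (intro restrict_ext) auto

lemma lc_threshold_eq: "lc_threshold \<alpha> C X Yt T ({1..n} - T) \<omega> = threshold (past_data \<omega>)"
proof
  fix k
  have past: "i \<in> cal \<Longrightarrow> past_data \<omega> i = triple i \<omega>" for i by (auto simp: past_data_def cal_def)
  have "map (\<lambda>i. conf_score C (train_data X Yt T \<omega>) (X i \<omega>) k)
      (filter (\<lambda>i. Yt i \<omega> = k) (sorted_list_of_set cal)) = cal_scores (past_data \<omega>) k"
    unfolding cal_scores_def using finite_cal past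
    by (intro map_cong filter_cong) (auto simp: obs_label_def triple_def score_def train_data_eq)
  then show "lc_threshold \<alpha> C X Yt T ({1..n} - T) \<omega> k = threshold (past_data \<omega>) k"
    by (simp add: lc_threshold_def threshold_def cal_def)
qed

lemma has_counts_past_data:
  "has_counts (past_data \<omega>) \<longleftrightarrow> (\<forall>k\<in>{1..K}. card {i \<in> {1..n} - T. Yt i \<omega> = k} = nk k)"
proof -
  have "{i \<in> {1..n} - T. Yt i \<omega> = k} = {i\<in>cal. obs_label (past_data \<omega>) i = k}" for k
    by (auto simp: cal_def obs_label_def past_data_def triple_def)
  then show ?thesis by (simp add: has_counts_def label_count_def)
qed

lemma measurable_restrict_triples:
  "J \<subseteq> idx \<Longrightarrow> (\<lambda>\<omega>. \<lambda>i\<in>J. triple i \<omega>) \<in> measurable M (data_space J)"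
  by (intro measurable_restrict measurable_triple) auto

lemma distr_restrict_triples:
  assumes "J \<subseteq> idx" "J \<noteq> {}"
  shows "distr M (data_space J) (\<lambda>\<omega>. \<lambda>i\<in>J. triple i \<omega>) = PiM J (\<lambda>_. P)"
proof -
  interpret prob_space M by (rule prob_space_M)
  have "indep_vars (\<lambda>_. triple_space) triple idx"
    using indep by (simp add: idx_def triple_def[abs_def])
  then have "indep_vars (\<lambda>_. triple_space) triple J"
    using assms(1) by (rule indep_vars_subset)
  then have "distr M (data_space J) (\<lambda>\<omega>. \<lambda>i\<in>J. triple i \<omega>) = PiM J (\<lambda>i. distr M triple_space (triple i))"
    using assms by (subst (asm) indep_vars_iff_distr_eq_PiM') (auto intro: measurable_triple)
  also have "\<dots> = PiM J (\<lambda>_. P)"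
    using assms(1) by (intro PiM_cong) (auto simp: distr_triple)
  finally show ?thesis .
qed

lemma measurable_past_data: "past_data \<in> measurable M past_space"
  unfolding past_data_def[abs_def] by (rule measurable_restrict_triples) (auto simp: idx_def)

lemma measurable_test_data: "test_data \<in> measurable M test_space"
  unfolding test_data_def[abs_def] by (rule measurable_restrict_triples) (simp add: test_in_idx)

lemma emeasure_all_data_preimage:
  assumes "A \<in> sets sample_law"
  shows "emeasure M {\<omega>\<in>space M. all_data \<omega> \<in> A} = emeasure sample_law A"
proof -
  have A: "A \<in> sets (data_space idx)" using assms sets_sample_law by simp
  have "emeasure sample_law A = emeasure (distr M (data_space idx) all_data) A"
    using distr_restrict_triples[of idx] by (simp add: all_data_def[abs_def] idx_def)
  also have "\<dots> = emeasure M (all_data -` A \<inter> space M)"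
    using A measurable_restrict_triples[of idx] by (intro emeasure_distr) (simp_all add: all_data_def[abs_def])
  finally show ?thesis by (simp add: vimage_def Int_def conj_commute)
qed

lemma emeasure_past_test_event:
  assumes A: "A \<in> sets (past_space \<Otimes>\<^sub>M test_space)"
  shows "emeasure M {\<omega>\<in>space M. (past_data \<omega>, test_data \<omega>) \<in> A}
       = (\<integral>\<^sup>+\<omega>. emeasure test_law (Pair (past_data \<omega>) -` A) \<partial>M)"
proof -
  interpret prob_space M by (rule prob_space_M)
  interpret test: prob_space test_law by (rule prob_space_PiM) (rule prob_space_P)
  have "indep_var past_space past_data test_space test_data"
    unfolding past_data_def[abs_def] test_data_def[abs_def] using indep
    by (intro indep_var_restrict) (auto simp: idx_def triple_def[abs_def])
  moreover have "distr M test_space test_data = test_law"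
    using distr_restrict_triples[of "{Suc n}"] test_in_idx by (simp add: test_data_def[abs_def])
  ultimately have joint: "distr M (past_space \<Otimes>\<^sub>M test_space) (\<lambda>\<omega>. (past_data \<omega>, test_data \<omega>))
      = distr M past_space past_data \<Otimes>\<^sub>M test_law"
    by (simp add: indep_var_distribution_eq)
  have "sets (distr M past_space past_data \<Otimes>\<^sub>M test_law) = sets (past_space \<Otimes>\<^sub>M test_space)"
    by (intro sets_pair_measure_cong sets_PiM_cong) (auto simp: sets_P)
  then have A': "A \<in> sets (distr M past_space past_data \<Otimes>\<^sub>M test_law)" using A by simp
  have "emeasure M {\<omega>\<in>space M. (past_data \<omega>, test_data \<omega>) \<in> A}
      = emeasure (distr M (past_space \<Otimes>\<^sub>M test_space) (\<lambda>\<omega>. (past_data \<omega>, test_data \<omega>))) A"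
  proof -
    have "(\<lambda>\<omega>. (past_data \<omega>, test_data \<omega>)) \<in> measurable M (past_space \<Otimes>\<^sub>M test_space)"
      using measurable_past_data measurable_test_data by (rule measurable_Pair)
    then show ?thesis using A by (subst emeasure_distr) (auto simp: vimage_def Int_def conj_commute)
  qed
  also have "\<dots> = (\<integral>\<^sup>+d. emeasure test_law (Pair d -` A) \<partial>distr M past_space past_data)"
    unfolding joint by (rule test.emeasure_pair_measure_alt[OF A'])
  also have "\<dots> = (\<integral>\<^sup>+\<omega>. emeasure test_law (Pair (past_data \<omega>) -` A) \<partial>M)"
    by (rule nn_integral_distr[OF measurable_past_data test.measurable_emeasure_Pair[OF A']])
  finally show ?thesis .
qed

lemma measurable_emeasure_section:
  assumes "A \<in> sets (past_space \<Otimes>\<^sub>M test_space)"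
  shows "(\<lambda>\<omega>. emeasure test_law (Pair (past_data \<omega>) -` A)) \<in> borel_measurable M"
proof -
  interpret test: prob_space test_law by (rule prob_space_PiM) (rule prob_space_P)
  have "sets (past_space \<Otimes>\<^sub>M test_law) = sets (past_space \<Otimes>\<^sub>M test_space)"
    by (intro sets_pair_measure_cong sets_PiM_cong) (auto simp: sets_P)
  then have "(\<lambda>d. emeasure test_law (Pair d -` A)) \<in> borel_measurable past_space"
    using assms by (intro test.measurable_emeasure_Pair) simp
  then show ?thesis by (rule measurable_compose[OF measurable_past_data])
qed

section \<open>Transfer to the true labels\<close>

definition dominated :: "(real ^ 'd) data_vector \<Rightarrow> bool" where
  "dominated d \<longleftrightarrow> (\<forall>k\<in>{1..K}. \<forall>l\<in>{1..K}. \<forall>t.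
     cdf_true P (\<lambda>x. score d x k) l t \<le> cdf_true P (\<lambda>x. score d x k) k t)"

definition test_event ::
  "((real ^ 'd) data_vector \<Rightarrow> ((real ^ 'd) \<times> nat \<times> nat) set)
   \<Rightarrow> ((real ^ 'd) data_vector \<times> (real ^ 'd) data_vector) set" where
  "test_event B = {p \<in> space (past_space \<Otimes>\<^sub>M test_space). has_counts (fst p) \<and> snd p (Suc n) \<in> B (fst p)}"

definition true_cover :: "(real ^ 'd) data_vector \<Rightarrow> nat \<Rightarrow> ((real ^ 'd) \<times> nat \<times> nat) set" where
  "true_cover d k = {z. fst (snd z) = k \<and> score d (fst z) k \<le> threshold d k}"

definition obs_cover :: "(real ^ 'd) data_vector \<Rightarrow> nat \<Rightarrow> ((real ^ 'd) \<times> nat \<times> nat) set" where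
  "obs_cover d k = {z. snd (snd z) = k \<and> score d (fst z) k \<le> threshold d k}"

definition count_event :: "'w set" where
  "count_event = {\<omega> \<in> space M. has_counts (past_data \<omega>)}"

lemma measurable_score_section:
  assumes "k \<in> {1..K}"
  shows "(\<lambda>x. score d x k) \<in> borel_measurable borel"
proof -
  have "train d \<in> space train_space"
    by (simp add: train_def space_PiM space_pair_measure)
  then have "(\<lambda>x. (train d, x)) \<in> measurable borel (train_space \<Otimes>\<^sub>M borel)"
    by (intro measurable_Pair measurable_const) auto
  moreover have "(\<lambda>p. conf_score C (fst p) (snd p) k) \<in> borel_measurable (train_space \<Otimes>\<^sub>M borel)"
    using score_measurable assms by blast
  ultimately have "(\<lambda>p. conf_score C (fst p) (snd p) k) \<circ> (\<lambda>x. (train d, x)) \<in> borel_measurable borel"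
    by (rule measurable_comp)
  then show ?thesis by (simp add: score_def o_def)
qed

lemma cover_sets:
  assumes "k \<in> {1..K}"
  shows "true_cover d k \<in> sets P" "obs_cover d k \<in> sets P"
proof -
  have "{x \<in> space borel. score d x k \<le> threshold d k} \<in> sets borel"
    using measurable_score_section[OF assms] by measurable
  then have A: "{x. score d x k \<le> threshold d k} \<in> sets borel" by simp
  show "true_cover d k \<in> sets P"
    using rectangle_in_sets_P[OF A, of "{k}" UNIV] by (simp add: true_cover_def conj_commute)
  show "obs_cover d k \<in> sets P"
    using rectangle_in_sets_P[OF A, of UNIV "{k}"] by (simp add: obs_cover_def conj_commute)
qed

lemma cdf_obs_le_cdf_true_if_dominated:
  assumes "dominated d" "k \<in> {1..K}"
  shows "cdf_obs P (\<lambda>x. score d x k) k t \<le> cdf_true P (\<lambda>x. score d x k) k t"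
proof (rule cdf_obs_le_cdf_true[OF measurable_score_section[OF assms(2)] assms(2)])
  show "\<forall>l\<in>{1..K}. cdf_true P (\<lambda>x. score d x k) l t \<le> cdf_true P (\<lambda>x. score d x k) k t"
    using assms unfolding dominated_def by blast
qed

lemma test_event_sets:
  assumes "Measurable.pred (past_space \<Otimes>\<^sub>M test_space) (\<lambda>p. snd p (Suc n) \<in> B (fst p))"
  shows "test_event B \<in> sets (past_space \<Otimes>\<^sub>M test_space)"
proof -
  have "Measurable.pred (past_space \<Otimes>\<^sub>M test_space) (\<lambda>p. has_counts (fst p))"
    using cal_def by (intro pred_has_counts) auto
  moreover have "test_event B = {p \<in> space (past_space \<Otimes>\<^sub>M test_space). has_counts (fst p)}
      \<inter> {p \<in> space (past_space \<Otimes>\<^sub>M test_space). snd p (Suc n) \<in> B (fst p)}"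
    by (auto simp: test_event_def)
  ultimately show ?thesis
    using assms by (simp add: pred_def sets.Int)
qed

lemma test_event_sets_instances:
  assumes k: "k \<in> {1..K}"
  shows "test_event (\<lambda>d. true_cover d k) \<in> sets (past_space \<Otimes>\<^sub>M test_space)"
    "test_event (\<lambda>d. obs_cover d k) \<in> sets (past_space \<Otimes>\<^sub>M test_space)"
    "test_event (\<lambda>_. {z. fst (snd z) = k}) \<in> sets (past_space \<Otimes>\<^sub>M test_space)"
    "test_event (\<lambda>_. {z. snd (snd z) = k}) \<in> sets (past_space \<Otimes>\<^sub>M test_space)"
proof -
  have test: "(\<lambda>p. snd p (Suc n)) \<in> measurable (past_space \<Otimes>\<^sub>M test_space) triple_space"
    by measurable
  have covered: "Measurable.pred (past_space \<Otimes>\<^sub>M test_space)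
      (\<lambda>p. score (fst p) (fst (snd p (Suc n))) k \<le> threshold (fst p) k)"
    using train_subset by (intro pred_le_threshold[OF _ _ k]) (auto simp: cal_def)
  show "test_event (\<lambda>d. true_cover d k) \<in> sets (past_space \<Otimes>\<^sub>M test_space)"
    using covered test by (intro test_event_sets) (simp add: true_cover_def, measurable)
  show "test_event (\<lambda>d. obs_cover d k) \<in> sets (past_space \<Otimes>\<^sub>M test_space)"
    using covered test by (intro test_event_sets) (simp add: obs_cover_def, measurable)
  show "test_event (\<lambda>_. {z. fst (snd z) = k}) \<in> sets (past_space \<Otimes>\<^sub>M test_space)"
    using test by (intro test_event_sets) (simp, measurable)
  show "test_event (\<lambda>_. {z. snd (snd z) = k}) \<in> sets (past_space \<Otimes>\<^sub>M test_space)"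
    using test by (intro test_event_sets) (simp, measurable)
qed

lemma emeasure_section_test_event:
  assumes "d \<in> space past_space" "B d \<in> sets P"
  shows "emeasure test_law (Pair d -` test_event B) = (if has_counts d then emeasure P (B d) else 0)"
proof -
  have "distr test_law P (\<lambda>f. f (Suc n)) = P"
    by (rule distr_PiM_component) (auto simp: prob_space_P)
  then have "emeasure P (B d) = emeasure (distr test_law P (\<lambda>f. f (Suc n))) (B d)"
    by simp
  also have "\<dots> = emeasure test_law ((\<lambda>f. f (Suc n)) -` B d \<inter> space test_law)"
    using assms(2) by (intro emeasure_distr) (auto intro: measurable_component_singleton)
  finally have "emeasure test_law {f \<in> space test_law. f (Suc n) \<in> B d} = emeasure P (B d)"
    by (simp add: vimage_def Int_def conj_commute)
  moreover have "Pair d -` test_event B = (if has_counts d then {f \<in> space test_law. f (Suc n) \<in> B d} else {})"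
    using assms(1) by (auto simp: test_event_def space_pair_measure space_PiM space_P space_triple_space)
  ultimately show ?thesis by simp
qed

lemma sets_count_event: "count_event \<in> sets M"
  using pred_has_counts[OF _ measurable_past_data] by (auto simp: count_event_def cal_def pred_def)

lemma emeasure_test_event_const:
  assumes "B \<in> sets P" "test_event (\<lambda>_. B) \<in> sets (past_space \<Otimes>\<^sub>M test_space)"
  shows "emeasure M {\<omega>\<in>space M. (past_data \<omega>, test_data \<omega>) \<in> test_event (\<lambda>_. B)}
       = emeasure P B * emeasure M count_event"
proof -
  have "emeasure M {\<omega>\<in>space M. (past_data \<omega>, test_data \<omega>) \<in> test_event (\<lambda>_. B)}
      = (\<integral>\<^sup>+\<omega>. emeasure P B * indicator count_event \<omega> \<partial>M)"
    unfolding emeasure_past_test_event[OF assms(2)]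
    using emeasure_section_test_event[OF measurable_space[OF measurable_past_data], of _ "\<lambda>_. B"] assms(1)
    by (intro nn_integral_cong) (simp add: count_event_def indicator_def)
  also have "\<dots> = emeasure P B * emeasure M count_event"
    by (rule nn_integral_cmult_indicator[OF sets_count_event])
  finally show ?thesis .
qed

lemma all_data_agrees_past: "\<forall>i\<in>{1..n}. all_data \<omega> i = past_data \<omega> i"
  by (simp add: all_data_def past_data_def idx_def)

lemma past_test_in_space:
  "\<omega> \<in> space M \<Longrightarrow> (past_data \<omega>, test_data \<omega>) \<in> space (past_space \<Otimes>\<^sub>M test_space)"
  using measurable_space[OF measurable_past_data] measurable_space[OF measurable_test_data]
  by (simp add: space_pair_measure)

lemma all_data_test: "all_data \<omega> (Suc n) = test_data \<omega> (Suc n)"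
  by (simp add: all_data_def test_data_def test_in_idx)

lemma all_data_in_space: "all_data \<omega> \<in> space (data_space idx)"
  by (simp add: all_data_def space_PiM space_triple_space)

lemma test_event_obs_cover:
  "\<omega> \<in> space M \<Longrightarrow> (past_data \<omega>, test_data \<omega>) \<in> test_event (\<lambda>d. obs_cover d k)
     \<longleftrightarrow> all_data \<omega> \<in> obs_cover_event k"
  using agree_on_past[OF all_data_agrees_past] past_test_in_space all_data_in_space
  by (auto simp: test_event_def obs_cover_def obs_cover_event_def obs_label_event_def
      all_data_test obs_label_def)

lemma test_event_obs_label:
  "\<omega> \<in> space M \<Longrightarrow> (past_data \<omega>, test_data \<omega>) \<in> test_event (\<lambda>_. {z. snd (snd z) = k})
     \<longleftrightarrow> all_data \<omega> \<in> obs_label_event k"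
  using agree_on_past[OF all_data_agrees_past] past_test_in_space all_data_in_space
  by (auto simp: test_event_def obs_label_event_def all_data_test obs_label_def)

text \<open>Given the past, part (i) compares the test-point probabilities of the two cover events.\<close>
lemma section_true_cover_ge:
  assumes d: "d \<in> space past_space" and dom: "has_counts d \<longrightarrow> dominated d" and k: "k \<in> {1..K}"
  shows "ennreal (measure P {z. fst (snd z) = k} / measure P {z. snd (snd z) = k})
           * emeasure test_law (Pair d -` test_event (\<lambda>d. obs_cover d k))
         \<le> emeasure test_law (Pair d -` test_event (\<lambda>d. true_cover d k))"
proof (cases "has_counts d")
  case True
  interpret P: prob_space P by (rule prob_space_P)
  define py where "py = measure P {z. fst (snd z) = k}"
  define po where "po = measure P {z. snd (snd z) = k}"
  have py: "py > 0" using true_label_pos k by (simp add: py_def space_P)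
  have po: "po > 0" using obs_label_pos k by (simp add: po_def space_P)
  have "cdf_obs P (\<lambda>x. score d x k) k (threshold d k) \<le> cdf_true P (\<lambda>x. score d x k) k (threshold d k)"
    using True dom k by (intro cdf_obs_le_cdf_true measurable_score_section) (auto simp: dominated_def)
  then have "measure P (obs_cover d k) / po \<le> measure P (true_cover d k) / py"
    by (simp add: cdf_obs_def cdf_true_def obs_cover_def true_cover_def po_def py_def space_P conj_commute)
  then have "py / po * measure P (obs_cover d k) \<le> measure P (true_cover d k)"
    using py po by (simp add: field_simps)
  then have "ennreal (py / po) * ennreal (measure P (obs_cover d k)) \<le> ennreal (measure P (true_cover d k))"
    using py po by (subst ennreal_mult[symmetric]) (auto intro: ennreal_leI)
  then show ?thesis
    using True unfolding py_def po_def
    by (simp only: emeasure_section_test_event[OF d] cover_sets[OF k] P.emeasure_eq_measure if_True)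
qed (simp add: emeasure_section_test_event[OF d] cover_sets[OF k])

lemma measure_true_cover_ge:
  assumes dom: "AE \<omega> in M. has_counts (past_data \<omega>) \<longrightarrow> dominated (past_data \<omega>)"
    and k: "k \<in> {1..K}"
  shows "measure P {z. fst (snd z) = k} / measure P {z. snd (snd z) = k}
           * measure sample_law (obs_cover_event k)
         \<le> measure M {\<omega>\<in>space M. (past_data \<omega>, test_data \<omega>) \<in> test_event (\<lambda>d. true_cover d k)}"
proof -
  interpret M: prob_space M by (rule prob_space_M)
  interpret Q: prob_space sample_law by (rule prob_space_sample_law)
  define c where "c = measure P {z. fst (snd z) = k} / measure P {z. snd (snd z) = k}"
  note sets = test_event_sets_instances[OF k]
  have "ennreal c * emeasure sample_law (obs_cover_event k)
      = ennreal c * emeasure M {\<omega>\<in>space M. (past_data \<omega>, test_data \<omega>) \<in> test_event (\<lambda>d. obs_cover d k)}"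
  proof -
    have "{\<omega>\<in>space M. (past_data \<omega>, test_data \<omega>) \<in> test_event (\<lambda>d. obs_cover d k)}
        = {\<omega>\<in>space M. all_data \<omega> \<in> obs_cover_event k}"
      using test_event_obs_cover by auto
    then show ?thesis using emeasure_all_data_preimage[OF obs_cover_event_sets[OF k]] by simp
  qed
  also have "\<dots> = (\<integral>\<^sup>+\<omega>. ennreal c * emeasure test_law (Pair (past_data \<omega>) -` test_event (\<lambda>d. obs_cover d k)) \<partial>M)"
    unfolding emeasure_past_test_event[OF sets(2)]
    by (rule nn_integral_cmult[symmetric, OF measurable_emeasure_section[OF sets(2)]])
  also have "\<dots> \<le> (\<integral>\<^sup>+\<omega>. emeasure test_law (Pair (past_data \<omega>) -` test_event (\<lambda>d. true_cover d k)) \<partial>M)"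
    using dom
    by (intro nn_integral_mono_AE, elim AE_mp, intro AE_I2 impI)
      (use section_true_cover_ge[OF measurable_space[OF measurable_past_data] _ k] in \<open>auto simp: c_def\<close>)
  also have "\<dots> = emeasure M {\<omega>\<in>space M. (past_data \<omega>, test_data \<omega>) \<in> test_event (\<lambda>d. true_cover d k)}"
    by (rule emeasure_past_test_event[OF sets(1), symmetric])
  finally show ?thesis
    by (simp add: c_def Q.emeasure_eq_measure M.emeasure_eq_measure ennreal_mult[symmetric])
qed

lemma measure_test_label_events:
  assumes k: "k \<in> {1..K}"
  shows "measure M {\<omega>\<in>space M. (past_data \<omega>, test_data \<omega>) \<in> test_event (\<lambda>_. {z. fst (snd z) = k})}
       = measure P {z. fst (snd z) = k} * measure M count_event"
    and "measure sample_law (obs_label_event k) = measure P {z. snd (snd z) = k} * measure M count_event"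
proof -
  interpret M: prob_space M by (rule prob_space_M)
  interpret P: prob_space P by (rule prob_space_P)
  interpret Q: prob_space sample_law by (rule prob_space_sample_law)
  note sets = test_event_sets_instances[OF k]
  show "measure M {\<omega>\<in>space M. (past_data \<omega>, test_data \<omega>) \<in> test_event (\<lambda>_. {z. fst (snd z) = k})}
      = measure P {z. fst (snd z) = k} * measure M count_event"
    using emeasure_test_event_const[OF rectangle_in_sets_P[of UNIV "{k}" UNIV, simplified] sets(3)]
    by (simp add: P.emeasure_eq_measure M.emeasure_eq_measure ennreal_mult[symmetric])
  have "emeasure sample_law (obs_label_event k)
      = emeasure M {\<omega>\<in>space M. (past_data \<omega>, test_data \<omega>) \<in> test_event (\<lambda>_. {z. snd (snd z) = k})}"
  proof -
    have "{\<omega>\<in>space M. (past_data \<omega>, test_data \<omega>) \<in> test_event (\<lambda>_. {z. snd (snd z) = k})}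
        = {\<omega>\<in>space M. all_data \<omega> \<in> obs_label_event k}"
      using test_event_obs_label by auto
    then show ?thesis using emeasure_all_data_preimage[OF obs_label_event_sets] by simp
  qed
  also have "\<dots> = emeasure P {z. snd (snd z) = k} * emeasure M count_event"
    by (rule emeasure_test_event_const[OF rectangle_in_sets_P[of UNIV UNIV "{k}", simplified] sets(4)])
  finally show "measure sample_law (obs_label_event k) = measure P {z. snd (snd z) = k} * measure M count_event"
    by (simp add: P.emeasure_eq_measure M.emeasure_eq_measure Q.emeasure_eq_measure ennreal_mult[symmetric])
qed

lemma true_conformal_coverage:
  assumes dom: "AE \<omega> in M. has_counts (past_data \<omega>) \<longrightarrow> dominated (past_data \<omega>)"
    and k: "k \<in> {1..K}"
  shows "(1 - \<alpha>) * measure M {\<omega>\<in>space M. (past_data \<omega>, test_data \<omega>) \<in> test_event (\<lambda>_. {z. fst (snd z) = k})}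
       \<le> measure M {\<omega>\<in>space M. (past_data \<omega>, test_data \<omega>) \<in> test_event (\<lambda>d. true_cover d k)}"
proof -
  define py where "py = measure P {z. fst (snd z) = k}"
  define po where "po = measure P {z. snd (snd z) = k}"
  have po: "po > 0" using obs_label_pos k by (simp add: po_def space_P)
  have "(1 - \<alpha>) * (py * measure M count_event)
      = py / po * ((1 - \<alpha>) * measure sample_law (obs_label_event k))"
    using po by (simp add: measure_test_label_events(2)[OF k] po_def)
  also have "\<dots> \<le> py / po * measure sample_law (obs_cover_event k)"
    using obs_conformal_coverage[OF k] po by (intro mult_left_mono) (auto simp: py_def)
  also have "\<dots> \<le> measure M {\<omega>\<in>space M. (past_data \<omega>, test_data \<omega>) \<in> test_event (\<lambda>d. true_cover d k)}"
    using measure_true_cover_ge[OF dom k] by (simp add: py_def po_def)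
  finally show ?thesis
    by (simp add: measure_test_label_events(1)[OF k] py_def)
qed

lemma count_event_pos: "measure M count_event > 0"
proof -
  interpret M: prob_space M by (rule prob_space_M)
  interpret P: prob_space P by (rule prob_space_P)
  interpret Q: prob_space sample_law by (rule prob_space_sample_law)
  obtain f where f: "f ` cal \<subseteq> {1..K}" "\<forall>l\<in>{1..K}. card {i\<in>cal. f i = l} = nk l"
    using exists_map_with_fiber_cards[of "{1..K}" cal nk] finite_cal counts_sum
    by (auto simp: cal_def)
  define E where "E i = {z :: (real ^ 'd) \<times> nat \<times> nat. snd (snd z) = f i}" for i
  have E: "E i \<in> sets P" for i
    using rectangle_in_sets_P[of UNIV UNIV "{f i}"] by (simp add: E_def)
  define S where "S = prod_emb idx (\<lambda>_. P) cal (Pi\<^sub>E cal E)"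
  have S: "S \<in> sets sample_law"
    unfolding S_def using finite_cal cal_subset_idx E by (intro sets_PiM_I) auto
  have "emeasure sample_law S = (\<Prod>i\<in>cal. emeasure P (E i))"
    unfolding S_def using finite_cal cal_subset_idx E by (intro emeasure_PiM_emb) (auto simp: prob_space_P)
  then have "measure sample_law S = (\<Prod>i\<in>cal. measure P (E i))"
    by (simp add: Q.emeasure_eq_measure P.emeasure_eq_measure prod_ennreal prod_nonneg)
  also have "\<dots> > 0"
    using obs_label_pos f(1) by (intro prod_pos) (auto simp: E_def space_P)
  finally have "measure sample_law S > 0" .
  moreover have "measure sample_law S = measure M {\<omega>\<in>space M. all_data \<omega> \<in> S}"
    using emeasure_all_data_preimage[OF S] by (simp add: Q.emeasure_eq_measure M.emeasure_eq_measure)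
  moreover have "{\<omega>\<in>space M. all_data \<omega> \<in> S} \<subseteq> count_event"
  proof
    fix \<omega> assume "\<omega> \<in> {\<omega>\<in>space M. all_data \<omega> \<in> S}"
    then have "\<omega> \<in> space M" "\<forall>i\<in>cal. obs_label (all_data \<omega>) i = f i"
      by (auto simp: S_def prod_emb_def E_def obs_label_def)
    then have "has_counts (all_data \<omega>)"
      using f(2) by (simp add: has_counts_def label_count_def cong: conj_cong)
    then show "\<omega> \<in> count_event"
      using \<open>\<omega> \<in> space M\<close> agree_on_past(2)[OF all_data_agrees_past] by (simp add: count_event_def)
  qed
  then have "measure M {\<omega>\<in>space M. all_data \<omega> \<in> S} \<le> measure M count_event"
    using sets_count_event by (intro M.finite_measure_mono)
  ultimately show ?thesis by linarith
qed

lemma conditional_coverage: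
  assumes dom: "AE \<omega> in M. has_counts (past_data \<omega>) \<longrightarrow> dominated (past_data \<omega>)"
    and k: "k \<in> {1..K}"
  shows "cond_prob M
           (\<lambda>\<omega>. Y (Suc n) \<omega> \<in> C (train (past_data \<omega>)) (X (Suc n) \<omega>) (threshold (past_data \<omega>)))
           (\<lambda>\<omega>. Y (Suc n) \<omega> = k \<and> \<omega> \<in> count_event) \<ge> 1 - \<alpha>"
proof -
  have in_box: "threshold d \<in> tau_box K" for d
    using threshold_in_unit_interval by (simp add: tau_box_def)
  have "Y (Suc n) \<omega> \<in> C (train (past_data \<omega>)) (X (Suc n) \<omega>) (threshold (past_data \<omega>)) \<and> Y (Suc n) \<omega> = k
      \<longleftrightarrow> score (past_data \<omega>) (X (Suc n) \<omega>) k \<le> threshold (past_data \<omega>) k \<and> Y (Suc n) \<omega> = k" for \<omega>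
    using consistent in_box k unfolding score_consistent_def score_def by blast
  then have cover: "{\<omega>\<in>space M. Y (Suc n) \<omega> \<in> C (train (past_data \<omega>)) (X (Suc n) \<omega>) (threshold (past_data \<omega>))
        \<and> (Y (Suc n) \<omega> = k \<and> \<omega> \<in> count_event)}
      = {\<omega>\<in>space M. (past_data \<omega>, test_data \<omega>) \<in> test_event (\<lambda>d. true_cover d k)}"
    using past_test_in_space
    by (auto simp: test_event_def true_cover_def count_event_def test_data_def triple_def)
  have label: "{\<omega>\<in>space M. Y (Suc n) \<omega> = k \<and> \<omega> \<in> count_event}
      = {\<omega>\<in>space M. (past_data \<omega>, test_data \<omega>) \<in> test_event (\<lambda>_. {z. fst (snd z) = k})}"
    using past_test_in_space
    by (auto simp: test_event_def count_event_def test_data_def triple_def)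
  have "measure M {\<omega>\<in>space M. Y (Suc n) \<omega> = k \<and> \<omega> \<in> count_event} > 0"
    unfolding label measure_test_label_events(1)[OF k]
    using true_label_pos k count_event_pos by (simp add: space_P)
  then show ?thesis
    using true_conformal_coverage[OF dom k]
    unfolding cond_prob_def cover label by (simp add: le_divide_eq)
qed

end

theorem corollary3:
  fixes K n :: nat and \<alpha> :: real
    and M :: "'w measure"
    and X :: "nat \<Rightarrow> 'w \<Rightarrow> real ^ 'd"
    and Y Yt :: "nat \<Rightarrow> 'w \<Rightarrow> nat"
    and T :: "nat set"
    and nk :: "nat \<Rightarrow> nat"
    and C :: "(real ^ 'd) tdata \<Rightarrow> real ^ 'd \<Rightarrow> (nat \<Rightarrow> real) \<Rightarrow> nat set"
  defines "P \<equiv> distr M triple_space (\<lambda>\<omega>. (X 1 \<omega>, Y 1 \<omega>, Yt 1 \<omega>))"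
      and "N \<equiv> {\<omega> \<in> space M. \<forall>k\<in>{1..K}. card {i \<in> {1..n} - T. Yt i \<omega> = k} = nk k}"
  assumes "K \<ge> 2" and "n \<ge> 2" and "0 < \<alpha>" and "\<alpha> < 1"
    and "prob_space M"
    (* i.i.d. triples (X_i, Y_i, Ytilde_i), i = 1..n+1 *)
    and "prob_space.indep_vars M (\<lambda>_. triple_space) (\<lambda>i \<omega>. (X i \<omega>, Y i \<omega>, Yt i \<omega>)) {1..Suc n}"
    and "\<forall>i\<in>{1..Suc n}. distr M triple_space (\<lambda>\<omega>. (X i \<omega>, Y i \<omega>, Yt i \<omega>)) = P"
    and "\<forall>i\<in>{1..Suc n}. \<forall>\<omega>\<in>space M. Y i \<omega> \<in> {1..K} \<and> Yt i \<omega> \<in> {1..K}"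
    (* Assumption 1 *)
    and "cond_indep_obs P (sets borel)"
    and "\<forall>l\<in>{1..K}. measure P {z \<in> space P. fst (snd z) = l} > 0"
    and "\<forall>l\<in>{1..K}. measure P {z \<in> space P. snd (snd z) = l} > 0"
    (* data split, fixed and nonempty *)
    and "T \<subseteq> {1..n}" and "T \<noteq> {}" and "{1..n} - T \<noteq> {}"
    (* fixed class counts in the calibration set *)
    and "\<forall>k\<in>{1..K}. nk k \<ge> 1" and "(\<Sum>k\<in>{1..K}. nk k) = card ({1..n} - T)"
    (* prediction function and its score *)
    and "prediction_function K C" and "score_consistent K C"
    and "\<forall>k\<in>{1..K}. (\<lambda>p. conf_score C (fst p) (snd p) k)
            \<in> borel_measurable (PiM T (\<lambda>_. (borel :: (real ^ 'd) measure) \<Otimes>\<^sub>M count_space UNIV) \<Otimes>\<^sub>M borel)"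
    (* hypothesis: a.s. max_{l \<noteq> k} F^k_l(t) \<le> F^k_k(t) *)
    and "AE \<omega> in M. \<omega> \<in> N \<longrightarrow>
           (\<forall>k\<in>{1..K}. \<forall>l\<in>{1..K}. \<forall>t::real. l \<noteq> k \<longrightarrow>
              cdf_true P (\<lambda>x. conf_score C (train_data X Yt T \<omega>) x k) l t
                \<le> cdf_true P (\<lambda>x. conf_score C (train_data X Yt T \<omega>) x k) k t)"
  shows "(AE \<omega> in M. \<omega> \<in> N \<longrightarrow>
            (\<forall>k\<in>{1..K}.
               cdf_true P (\<lambda>x. conf_score C (train_data X Yt T \<omega>) x k) k
                   (lc_threshold \<alpha> C X Yt T ({1..n} - T) \<omega> k)
                 - cdf_obs P (\<lambda>x. conf_score C (train_data X Yt T \<omega>) x k) k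
                   (lc_threshold \<alpha> C X Yt T ({1..n} - T) \<omega> k) \<ge> 0))
       \<and> (\<forall>k\<in>{1..K}.
            cond_prob M
              (\<lambda>\<omega>. Y (Suc n) \<omega> \<in> C (train_data X Yt T \<omega>) (X (Suc n) \<omega>)
                                    (lc_threshold \<alpha> C X Yt T ({1..n} - T) \<omega>))
              (\<lambda>\<omega>. Y (Suc n) \<omega> = k \<and> \<omega> \<in> N) \<ge> 1 - \<alpha>)"
proof -
  interpret contaminated_conformal K n \<alpha> M X Y Yt T nk C P
    by (intro contaminated_conformal.intro) (fact assms)+
  have N_eq: "N = count_event"
    by (auto simp: N_def count_event_def has_counts_past_data)
  have conf_score_eq: "conf_score C (train_data X Yt T \<omega>) x k = score (past_data \<omega>) x k" for \<omega> x k
    by (simp add: score_def train_data_eq)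
  have dom: "AE \<omega> in M. has_counts (past_data \<omega>) \<longrightarrow> dominated (past_data \<omega>)"
    using assms(22) AE_space
    by eventually_elim (fastforce simp: N_eq count_event_def dominated_def conf_score_eq)
  show ?thesis
  proof
    show "AE \<omega> in M. \<omega> \<in> N \<longrightarrow> (\<forall>k\<in>{1..K}.
        cdf_true P (\<lambda>x. conf_score C (train_data X Yt T \<omega>) x k) k (lc_threshold \<alpha> C X Yt T ({1..n} - T) \<omega> k)
        - cdf_obs P (\<lambda>x. conf_score C (train_data X Yt T \<omega>) x k) k (lc_threshold \<alpha> C X Yt T ({1..n} - T) \<omega> k)
        \<ge> 0)"
      using dom by eventually_elim (auto simp: N_eq count_event_def conf_score_eq cdf_obs_le_cdf_true_if_dominated)
    show "\<forall>k\<in>{1..K}. cond_prob M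
        (\<lambda>\<omega>. Y (Suc n) \<omega> \<in> C (train_data X Yt T \<omega>) (X (Suc n) \<omega>) (lc_threshold \<alpha> C X Yt T ({1..n} - T) \<omega>))
        (\<lambda>\<omega>. Y (Suc n) \<omega> = k \<and> \<omega> \<in> N) \<ge> 1 - \<alpha>"
      unfolding N_eq train_data_eq lc_threshold_eq using conditional_coverage[OF dom] by blast
  qed
qed

end
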